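(* Let $d\ge2$ be an integer and $N_1,\dots,N_d$ positive integers. Suppose $\mathbf{b}=(b_1,\dots,b_d)\in\mathbb{Z}^d$ is a nonzero vector with $\gcd(b_1,\dots,b_d)=1$ and $|b_i|\le N_i$ for all $1\le i\le d$. Then there exists a map $f_{\mathbf{b}}:\mathbb{Z}^d\to\mathbb{Z}^{d-1}$ of the form $f_{\mathbf{b}}(\mathbf{x})=M\mathbf{x}+\mathbf{v}$ with $M\in\mathbb{Z}^{(d-1)\times d}$ and $\mathbf{v}\in\mathbb{Z}^{d-1}$ such that: (1) for any $\mathbf{x}_1,\mathbf{x}_2\in\mathbb{Z}^d$, $f_{\mathbf{b}}(\mathbf{x}_1)=f_{\mathbf{b}}(\mathbf{x}_2)$ if and only if $\mathbf{x}_1-\mathbf{x}_2=k\mathbf{b}$ for some $k\in\mathbb{Z}$; (2) there exist positive integers $N_1^*,\dots,N_{d-1}^*\ge\min_{1\le i\le d}N_i$ with \[ \frac12N_1\cdots N_d\cdot\Big(\max_{1\le i\le d}\frac{|b_i|}{N_i}\Big)\le N_1^*\cdots N_{d-1}^*\le2^{d^2}N_1\cdots N_d\cdot\Big(\max_{1\le i\le d}\frac{|b_i|}{N_i}\Big) \] and $f_{\mathbf{b}}([N_1]\times\cdots\times[N_d])\subseteq[N_1^*]\times\cdots\times[N_{d-1}^*]$.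
   Context: $[N]=\{1,\dots,N\}$. *)

theory Defs
  imports Complex_Main
begin

(* Vectors in Z^n are represented as functions nat => int, with components
   indexed by 0..n-1 (only these components are relevant).
   The affine map x |-> M x + v from Z^d to Z^(d-1). *)
definition affine_map :: "nat \<Rightarrow> (nat \<Rightarrow> nat \<Rightarrow> int) \<Rightarrow> (nat \<Rightarrow> int) \<Rightarrow> (nat \<Rightarrow> int) \<Rightarrow> (nat \<Rightarrow> int)" where
  "affine_map d M v x = (\<lambda>j. (\<Sum>i<d. M j i * x i) + v j)"

end

(*
  The integer vectors orthogonal to b form a lattice of rank d - 1, and since gcd(b) = 1 the common
  integer kernel of any basis of it is exactly Z b. Measure vectors with the weighted norm
  sum_i N_i^2 x_i^2. An explicit triangular basis, built from the chain of gcds of b starting at a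
  coordinate m maximising |b_m| / N_m, has Gram-Schmidt product at most 2^(d-1) X^2, where
  X = N_1 ... N_d |b_m| / N_m. An LLL-reduced basis of the same lattice, which exists because the LLL
  potential attains its minimum on a finite set of size-reduced bases, has the same Gram-Schmidt
  product bound and rows of norm at most 2^(2k+1) times their Gram-Schmidt norms. Take its rows as M:
  the j-th coordinate of M x on the box ranges over an interval of length sum_i |M_ji| N_i, which is
  at most sqrt d times the norm of the row, so the product of these lengths is at most 2^(d^2) X.
  Shifting by v moves the image into the box of these lengths; enlarging one side gives the lower
  bound.
*)

theory Submission
  imports Defs "HOL-Analysis.Convex"
begin

definition swap_adj :: "(nat \<Rightarrow> 'a) \<Rightarrow> nat \<Rightarrow> nat \<Rightarrow> 'a" where
  "swap_adj f j = (\<lambda>l. if l = j then f (Suc j) else if l = Suc j then f j else f l)"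

locale weighted_inner =
  fixes n :: nat and w :: "nat \<Rightarrow> real"
  assumes weight_ge_1: "\<And>t. t < n \<Longrightarrow> w t \<ge> 1"
begin

definition ip :: "(nat \<Rightarrow> real) \<Rightarrow> (nat \<Rightarrow> real) \<Rightarrow> real" where
  "ip x y = (\<Sum>t<n. w t * x t * y t)"

lemma weight_nonneg: "t < n \<Longrightarrow> w t \<ge> 0"
  using weight_ge_1[of t] by linarith

lemma ip_sym: "ip x y = ip y x"
  unfolding ip_def by (simp add: mult_ac)

lemma ip_add_left: "ip (\<lambda>t. x t + y t) z = ip x z + ip y z"
  unfolding ip_def by (simp add: algebra_simps sum.distrib)

lemma ip_diff_left: "ip (\<lambda>t. x t - y t) z = ip x z - ip y z"
  unfolding ip_def by (simp add: algebra_simps sum_subtractf)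

lemma ip_scale_left: "ip (\<lambda>t. c * x t) z = c * ip x z"
  unfolding ip_def by (simp add: algebra_simps sum_distrib_left)

lemma ip_sum_left: "ip (\<lambda>t. \<Sum>l\<in>L. h l t) z = (\<Sum>l\<in>L. ip (h l) z)"
  unfolding ip_def by (simp add: sum_distrib_left sum_distrib_right sum.swap[of _ L] mult_ac)

lemma ip_cong_left: "(\<And>t. t < n \<Longrightarrow> x t = x' t) \<Longrightarrow> ip x y = ip x' y"
  unfolding ip_def by (rule sum.cong) auto

lemma ip_cong_right: "(\<And>t. t < n \<Longrightarrow> y t = y' t) \<Longrightarrow> ip x y = ip x y'"
  unfolding ip_def by (rule sum.cong) auto

lemma ip_nonneg: "ip x x \<ge> 0"
  unfolding ip_def using weight_nonneg by (intro sum_nonneg) (simp add: mult.assoc)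

lemma ip_self_ge_coord: assumes "t < n" shows "w t * (x t)^2 \<le> ip x x"
proof -
  have "w t * (x t)^2 = w t * x t * x t" by (simp add: power2_eq_square mult.assoc)
  also have "\<dots> \<le> ip x x"
    unfolding ip_def using assms weight_nonneg
    by (intro member_le_sum[of t "{..<n}" "\<lambda>t. w t * x t * x t"]) (auto simp: mult.assoc)
  finally show ?thesis .
qed

lemma ip_self_zeroD: assumes "ip x x = 0" "t < n" shows "x t = 0"
proof -
  have "w t * (x t)^2 \<le> 0" using ip_self_ge_coord[OF assms(2), of x] assms(1) by simp
  moreover have "w t \<ge> 1" using weight_ge_1 assms(2) by simp
  moreover have "(x t)^2 \<le> w t * (x t)^2"
    using mult_right_mono[of 1 "w t" "(x t)^2"] \<open>w t \<ge> 1\<close> by simp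
  ultimately have "(x t)^2 \<le> 0" by linarith
  then show ?thesis by simp
qed

lemma ip_self_zero_right: assumes "ip x x = 0" shows "ip y x = 0"
proof -
  have "ip y x = ip y (\<lambda>_. 0)" by (rule ip_cong_right) (use ip_self_zeroD[OF assms] in auto)
  also have "\<dots> = 0" by (simp add: ip_def)
  finally show ?thesis .
qed

lemma ip_add_right: "ip z (\<lambda>t. x t + y t) = ip z x + ip z y"
  by (subst (1 2 3) ip_sym) (rule ip_add_left)

lemma ip_diff_right: "ip z (\<lambda>t. x t - y t) = ip z x - ip z y"
  by (subst (1 2 3) ip_sym) (rule ip_diff_left)

lemma ip_scale_right: "ip z (\<lambda>t. c * x t) = c * ip z x"
  by (subst (1 2) ip_sym) (rule ip_scale_left)

lemma ip_sum_right: "ip z (\<lambda>t. \<Sum>l\<in>L. h l t) = (\<Sum>l\<in>L. ip z (h l))"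
  by (subst ip_sym) (simp add: ip_sum_left ip_sym)

text \<open>If some \<open>gso f l\<close> vanishes, division by zero makes its coefficient \<open>0\<close>; the lemmas
  below hold without any independence assumption on \<open>f\<close>.\<close>

function gso :: "(nat \<Rightarrow> nat \<Rightarrow> real) \<Rightarrow> nat \<Rightarrow> nat \<Rightarrow> real" where
  "gso f k = (\<lambda>t. f k t - (\<Sum>l<k. (ip (f k) (gso f l) / ip (gso f l) (gso f l)) * gso f l t))"
  by auto
termination by (relation "measure (\<lambda>(f,k). k)") auto

declare gso.simps[simp del]

definition mu :: "(nat \<Rightarrow> nat \<Rightarrow> real) \<Rightarrow> nat \<Rightarrow> nat \<Rightarrow> real" where
  "mu f k l = ip (f k) (gso f l) / ip (gso f l) (gso f l)"

lemma gso_unfold: "gso f k t = f k t - (\<Sum>l<k. mu f k l * gso f l t)"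
  by (subst gso.simps) (simp add: mu_def)

definition span_first :: "(nat \<Rightarrow> nat \<Rightarrow> real) \<Rightarrow> nat \<Rightarrow> (nat \<Rightarrow> real) set" where
  "span_first f k = {x. \<exists>c. \<forall>t<n. x t = (\<Sum>l<k. c l * f l t)}"

lemma span_first_zero: "(\<lambda>_. 0) \<in> span_first f k"
  unfolding span_first_def by (rule CollectI, rule exI[of _ "\<lambda>_. 0"]) simp

lemma span_first_add:
  assumes "x \<in> span_first f k" "y \<in> span_first f k"
  shows "(\<lambda>t. x t + y t) \<in> span_first f k"
proof -
  obtain c c' where "\<forall>t<n. x t = (\<Sum>l<k. c l * f l t)" "\<forall>t<n. y t = (\<Sum>l<k. c' l * f l t)"
    using assms unfolding span_first_def by blast
  then show ?thesis
    unfolding span_first_def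
    by (intro CollectI exI[of _ "\<lambda>l. c l + c' l"]) (simp add: algebra_simps sum.distrib)
qed

lemma span_first_scale:
  assumes "x \<in> span_first f k"
  shows "(\<lambda>t. a * x t) \<in> span_first f k"
proof -
  obtain c where "\<forall>t<n. x t = (\<Sum>l<k. c l * f l t)" using assms unfolding span_first_def by blast
  then show ?thesis
    unfolding span_first_def
    by (intro CollectI exI[of _ "\<lambda>l. a * c l"]) (simp add: algebra_simps sum_distrib_left)
qed

lemma span_first_cong: "x \<in> span_first f k \<Longrightarrow> (\<And>t. t < n \<Longrightarrow> x t = y t) \<Longrightarrow> y \<in> span_first f k"
  unfolding span_first_def by auto

lemma span_first_diff: "x \<in> span_first f k \<Longrightarrow> y \<in> span_first f k \<Longrightarrow> (\<lambda>t. x t - y t) \<in> span_first f k"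
  using span_first_add[of x f k "\<lambda>t. (-1) * y t"] span_first_scale[of y f k "-1"] by simp

lemma span_first_gen: "l < k \<Longrightarrow> f l \<in> span_first f k"
  unfolding span_first_def
proof (rule CollectI, rule exI[of _ "\<lambda>l'. if l' = l then 1 else 0"], intro allI impI)
  fix t assume "l < k" "t < n"
  have "(\<Sum>la<k. (if la = l then 1 else 0) * f la t) = (\<Sum>la<k. if la = l then f la t else 0)"
    by (rule sum.cong) auto
  then show "f l t = (\<Sum>la<k. (if la = l then 1 else 0) * f la t)" using \<open>l < k\<close> by simp
qed

lemma span_first_mono:
  assumes "k \<le> k'" "x \<in> span_first f k"
  shows "x \<in> span_first f k'"
proof -
  obtain c where c: "\<forall>t<n. x t = (\<Sum>l<k. c l * f l t)" using assms(2) unfolding span_first_def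
    by blast
  have "(\<Sum>l<k'. (if l < k then c l else 0) * f l t) = (\<Sum>l<k. c l * f l t)" for t
    using assms(1)
    by (simp add: if_distrib[of "\<lambda>a. a * _"] sum.If_cases lessThan_subset_iff Int_absorb1
        flip: lessThan_def)
  then show ?thesis
    using c unfolding span_first_def
    by (intro CollectI exI[of _ "\<lambda>l. if l < k then c l else 0"]) simp
qed

lemma span_first_sum:
  "finite L \<Longrightarrow> (\<And>l. l \<in> L \<Longrightarrow> h l \<in> span_first f k) \<Longrightarrow> (\<lambda>t. \<Sum>l\<in>L. h l t) \<in> span_first f k"
proof (induction L rule: finite_induct)
  case empty
  then show ?case using span_first_zero by simp
next
  case (insert a F)
  then show ?case using span_first_add[of "h a" f k "\<lambda>t. \<Sum>l\<in>F. h l t"] by simp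
qed

lemma span_first_sub:
  assumes "\<And>l. l < k \<Longrightarrow> g l \<in> span_first f k'" and "x \<in> span_first g k"
  shows "x \<in> span_first f k'"
proof -
  obtain c where c: "\<And>t. t < n \<Longrightarrow> x t = (\<Sum>l<k. c l * g l t)" using assms(2) unfolding span_first_def
    by auto
  have "(\<lambda>t. \<Sum>l<k. c l * g l t) \<in> span_first f k'"
    by (rule span_first_sum) (auto intro: span_first_scale assms(1))
  then show ?thesis by (rule span_first_cong) (simp add: c)
qed

lemma ip_span_first_orth:
  assumes "\<And>l. l < k \<Longrightarrow> ip x (f l) = 0" and "y \<in> span_first f k"
  shows "ip x y = 0"
proof -
  obtain c where c: "\<And>t. t < n \<Longrightarrow> y t = (\<Sum>l<k. c l * f l t)" using assms(2) unfolding span_first_def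
    by auto
  have "ip x y = ip x (\<lambda>t. \<Sum>l<k. c l * f l t)" by (rule ip_cong_right) (simp add: c)
  also have "\<dots> = (\<Sum>l<k. c l * ip x (f l))" by (simp add: ip_sum_right ip_scale_right)
  also have "\<dots> = 0" using assms(1) by simp
  finally show ?thesis .
qed

lemma gso_orth_less: "l < k \<Longrightarrow> ip (gso f k) (gso f l) = 0"
proof (induction k arbitrary: l rule: less_induct)
  case (less k)
  have pair: "ip (gso f l') (gso f l) = 0" if "l' < k" "l < k" "l' \<noteq> l" for l'
  proof (cases "l < l'")
    case True
    then show ?thesis using less.IH[OF that(1) True] by simp
  next
    case False
    then have "l' < l" using that by simp
    then show ?thesis by (subst ip_sym) (rule less.IH[OF less.prems \<open>l' < l\<close>])
  qed
  have "ip (gso f k) (gso f l) = ip (\<lambda>t. f k t - (\<Sum>l'<k. mu f k l' * gso f l' t)) (gso f l)"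
    by (rule ip_cong_left) (simp add: gso_unfold[of f k])
  also have "\<dots> = ip (f k) (gso f l) - (\<Sum>l'<k. mu f k l' * ip (gso f l') (gso f l))"
    by (simp add: ip_diff_left ip_sum_left ip_scale_left)
  also have "(\<Sum>l'<k. mu f k l' * ip (gso f l') (gso f l)) = mu f k l * ip (gso f l) (gso f l)"
    using pair less.prems by (subst sum.remove[of _ l]) (auto intro!: sum.neutral)
  also have "ip (f k) (gso f l) - mu f k l * ip (gso f l) (gso f l) = 0"
  proof (cases "ip (gso f l) (gso f l) = 0")
    case True
    then show ?thesis using ip_self_zero_right by simp
  next
    case False
    then show ?thesis by (simp add: mu_def)
  qed
  finally show ?case .
qed

lemma gso_orth: assumes "l \<noteq> k" shows "ip (gso f k) (gso f l) = 0"
proof (cases "l < k")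
  case True then show ?thesis by (rule gso_orth_less)
next
  case False then have "k < l" using assms by simp
  then show ?thesis by (subst ip_sym) (rule gso_orth_less)
qed

lemma vec_minus_gso_in_span_gso: "(\<lambda>t. f k t - gso f k t) \<in> span_first (gso f) k"
  unfolding span_first_def
  by (rule CollectI, rule exI[of _ "mu f k"]) (simp add: gso_unfold[of f k])

lemma gso_in_span_first: "gso f k \<in> span_first f (Suc k)"
proof (induction k rule: less_induct)
  case (less k)
  have "(\<lambda>t. \<Sum>l<k. mu f k l * gso f l t) \<in> span_first f (Suc k)"
    by (rule span_first_sum) (auto intro!: span_first_scale span_first_mono[OF _ less.IH])
  then have "(\<lambda>t. f k t - (\<Sum>l<k. mu f k l * gso f l t)) \<in> span_first f (Suc k)"
    by (intro span_first_diff span_first_gen) auto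
  then show ?case by (rule span_first_cong) (simp add: gso_unfold[of f k])
qed

lemma span_first_gso_eq: "span_first (gso f) k = span_first f k"
proof
  show "span_first (gso f) k \<subseteq> span_first f k"
  proof
    fix x assume "x \<in> span_first (gso f) k"
    show "x \<in> span_first f k"
      by (rule span_first_sub[OF _ \<open>x \<in> span_first (gso f) k\<close>], rule span_first_mono[OF _ gso_in_span_first]) simp
  qed
  have "f l \<in> span_first (gso f) k" if "l < k" for l
  proof -
    have "(\<lambda>t. (f l t - gso f l t) + gso f l t) \<in> span_first (gso f) k"
      by (rule span_first_add) (use that in \<open>auto intro: span_first_mono[OF _ vec_minus_gso_in_span_gso] span_first_gen\<close>)
    then show ?thesis by (rule span_first_cong) simp
  qed
  then show "span_first f k \<subseteq> span_first (gso f) k"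
    by (auto intro: span_first_sub)
qed

lemma gso_orth_span_first: "y \<in> span_first f k \<Longrightarrow> ip (gso f k) y = 0"
  by (rule ip_span_first_orth[of k _ "gso f"]) (auto simp: gso_orth_less span_first_gso_eq)

lemma gso_orth_vec: "l < k \<Longrightarrow> ip (gso f k) (f l) = 0"
  by (rule gso_orth_span_first) (rule span_first_gen)

lemma vec_minus_gso_in_span: "(\<lambda>t. f k t - gso f k t) \<in> span_first f k"
  using vec_minus_gso_in_span_gso span_first_gso_eq by auto

lemma ip_vec_gso_self: "ip (f k) (gso f k) = ip (gso f k) (gso f k)"
proof -
  have "ip (f k) (gso f k) = ip (\<lambda>t. (f k t - gso f k t) + gso f k t) (gso f k)" by simp
  also have "\<dots> = ip (\<lambda>t. f k t - gso f k t) (gso f k) + ip (gso f k) (gso f k)"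
    by (rule ip_add_left)
  also have "ip (\<lambda>t. f k t - gso f k t) (gso f k) = 0"
    by (subst ip_sym) (rule gso_orth_span_first[OF vec_minus_gso_in_span])
  finally show ?thesis by simp
qed

lemma ip_vec_gso_later: "k < l \<Longrightarrow> ip (f k) (gso f l) = 0"
  by (subst ip_sym) (rule gso_orth_vec)

lemma gso_unique: assumes "(\<lambda>t. f k t - v t) \<in> span_first f k" "\<And>l. l < k \<Longrightarrow> ip v (f l) = 0" "t < n"
  shows "v t = gso f k t"
proof -
  let ?d = "\<lambda>t. v t - gso f k t"
  have d: "?d \<in> span_first f k"
    using span_first_diff[OF vec_minus_gso_in_span assms(1), of ] by (rule span_first_cong) simp
  have "ip ?d ?d = 0"
    by (rule ip_span_first_orth[OF _ d]) (simp add: ip_diff_left assms(2) gso_orth_vec)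
  from ip_self_zeroD[OF this assms(3)] show ?thesis by simp
qed

lemma ip_add_self: "ip (\<lambda>t. x t + y t) (\<lambda>t. x t + y t) = ip x x + 2 * ip x y + ip y y"
  by (simp add: ip_add_left ip_add_right ip_sym[of y x])

lemma gso_minimal: assumes "y \<in> span_first f k"
  shows "ip (gso f k) (gso f k) \<le> ip (\<lambda>t. f k t - y t) (\<lambda>t. f k t - y t)"
proof -
  let ?s = "\<lambda>t. (f k t - gso f k t) - y t"
  have s: "?s \<in> span_first f k" by (rule span_first_diff[OF vec_minus_gso_in_span assms])
  have e: "(\<lambda>t. f k t - y t) = (\<lambda>t. gso f k t + ?s t)" by (rule ext) simp
  have "ip (\<lambda>t. f k t - y t) (\<lambda>t. f k t - y t) = ip (\<lambda>t. gso f k t + ?s t) (\<lambda>t. gso f k t + ?s t)"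
    by (simp only: e)
  also have "\<dots> = ip (gso f k) (gso f k) + ip ?s ?s"
    by (subst ip_add_self) (simp add: gso_orth_span_first[OF s])
  finally show ?thesis using ip_nonneg[of ?s] by simp
qed

lemma ip_self_gso_decomp:
  "ip (f k) (f k) = ip (gso f k) (gso f k) + (\<Sum>l<k. (mu f k l)^2 * ip (gso f l) (gso f l))"
proof -
  let ?S = "\<lambda>t. \<Sum>l<k. mu f k l * gso f l t"
  have fk: "ip (f k) (f k) = ip (\<lambda>t. gso f k t + ?S t) (\<lambda>t. gso f k t + ?S t)"
  proof -
    have "ip (f k) (f k) = ip (\<lambda>t. gso f k t + ?S t) (f k)"
      by (rule ip_cong_left) (simp add: gso_unfold[of f k])
    also have "\<dots> = ip (\<lambda>t. gso f k t + ?S t) (\<lambda>t. gso f k t + ?S t)"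
      by (rule ip_cong_right) (simp add: gso_unfold[of f k])
    finally show ?thesis .
  qed
  have a: "ip (gso f k) ?S = 0"
    by (auto simp: ip_sum_right ip_scale_right intro!: sum.neutral gso_orth)
  have b: "ip (gso f l) ?S = mu f k l * ip (gso f l) (gso f l)" if "l < k" for l
  proof -
    have "ip (gso f l) ?S = (\<Sum>l'<k. mu f k l' * ip (gso f l) (gso f l'))"
      by (simp add: ip_sum_right ip_scale_right)
    also have "\<dots> = mu f k l * ip (gso f l) (gso f l)"
      using that by (subst sum.remove[of _ l]) (auto intro!: sum.neutral simp: gso_orth)
    finally show ?thesis .
  qed
  have "ip ?S ?S = (\<Sum>l<k. mu f k l * ip (gso f l) ?S)"
    by (simp add: ip_sum_left ip_scale_left)
  also have "\<dots> = (\<Sum>l<k. (mu f k l)^2 * ip (gso f l) (gso f l))"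
    by (rule sum.cong) (simp_all add: b power2_eq_square)
  finally show ?thesis using fk a by (simp add: ip_add_self)
qed

lemma span_first_vec_cong:
  "(\<And>l t. l < k \<Longrightarrow> t < n \<Longrightarrow> f' l t = f l t) \<Longrightarrow> span_first f' k = span_first f k"
  unfolding span_first_def by (auto intro!: sum.cong)

lemma span_first_eqI:
  "(\<And>l. l < k \<Longrightarrow> f' l \<in> span_first f k) \<Longrightarrow> (\<And>l. l < k \<Longrightarrow> f l \<in> span_first f' k)
    \<Longrightarrow> span_first f' k = span_first f k"
  by (auto intro: span_first_sub)

lemma gso_eqI:
  assumes "span_first f' k = span_first f k" "(\<lambda>t. f' k t - f k t) \<in> span_first f k" "t < n"
  shows "gso f' k t = gso f k t"
proof -
  have "(\<lambda>t. (f' k t - f k t) + (f k t - gso f k t)) \<in> span_first f k"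
    by (rule span_first_add[OF assms(2) vec_minus_gso_in_span])
  then have a: "(\<lambda>t. f' k t - gso f k t) \<in> span_first f' k" using assms(1)
    by (rule_tac span_first_cong) auto
  have b: "ip (gso f k) (f' l) = 0" if "l < k" for l
    using gso_orth_span_first[of "f' l" f k] span_first_gen[OF that, of f'] assms(1) by simp
  show ?thesis using gso_unique[OF a b assms(3)] by simp
qed

lemma gso_cong: assumes "\<And>l t. l \<le> k \<Longrightarrow> t < n \<Longrightarrow> f' l t = f l t" "t < n"
  shows "gso f' k t = gso f k t"
  by (rule gso_eqI[OF span_first_vec_cong _ assms(2)]) (use assms(1) in \<open>auto intro: span_first_cong[OF span_first_zero]\<close>)

lemma gso_triangular: assumes "\<And>l. l \<le> k \<Longrightarrow> (\<lambda>t. f' l t - f l t) \<in> span_first f l" "t < n"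
  shows "gso f' k t = gso f k t"
proof -
  have sub: "span_first f' k' \<subseteq> span_first f k'" if "k' \<le> k" for k'
  proof -
    have "f' l \<in> span_first f k'" if "l < k'" for l
    proof -
      have "(\<lambda>t. f l t + (f' l t - f l t)) \<in> span_first f k'"
        by (rule span_first_add[OF span_first_gen[OF that] span_first_mono[OF _ assms(1)]]) (use that \<open>k' \<le> k\<close> in auto)
      then show ?thesis by (rule span_first_cong) simp
    qed
    then show ?thesis by (auto intro: span_first_sub)
  qed
  have eq: "span_first f' k' = span_first f k'" if "k' \<le> k" for k'
    using that
  proof (induction k' rule: less_induct)
    case (less k')
    have "f l \<in> span_first f' k'" if "l < k'" for l
    proof -
      have "(\<lambda>t. f' l t - f l t) \<in> span_first f' l"
        using assms(1)[of l] less.IH[of l] that less.prems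
        by auto
      then have d: "(\<lambda>t. f' l t - f l t) \<in> span_first f' k'"
        by (rule span_first_mono[rotated]) (use that in auto)
      have "(\<lambda>t. f' l t - (f' l t - f l t)) \<in> span_first f' k'"
        by (rule span_first_diff[OF span_first_gen[OF that] d])
      then show ?thesis by (rule span_first_cong) simp
    qed
    then show ?case using sub[OF less.prems] by (auto intro: span_first_sub)
  qed
  show ?thesis by (rule gso_eqI[OF eq assms(1) assms(2)]) simp_all
qed

lemma ip_diff_scale_self:
  "ip (\<lambda>t. x t - c * y t) (\<lambda>t. x t - c * y t) = ip x x - 2 * c * ip x y + c^2 * ip y y"
proof -
  have "ip (\<lambda>t. x t - c * y t) (\<lambda>t. x t - c * y t) = ip x x - c * ip x y - (c * ip y x - c * (c * ip y y))"
    by (simp only: ip_diff_left ip_diff_right ip_scale_left ip_scale_right)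
  then show ?thesis by (simp add: ip_sym[of y x] power2_eq_square algebra_simps)
qed

lemma gso_swap_adj_less: "l < j \<Longrightarrow> t < n \<Longrightarrow> gso (swap_adj f j) l t = gso f l t"
  by (rule gso_cong) (auto simp: swap_adj_def)

lemma gso_swap_adj_greater: assumes "Suc j < l" "t < n" shows "gso (swap_adj f j) l t = gso f l t"
proof (rule gso_eqI[OF span_first_eqI _ assms(2)])
  show "swap_adj f j l' \<in> span_first f l" if "l' < l" for l'
    using that assms(1) by (auto simp: swap_adj_def intro!: span_first_gen)
  show "f l' \<in> span_first (swap_adj f j) l" if "l' < l" for l'
  proof -
    consider "l' = j" | "l' = Suc j" | "l' \<noteq> j" "l' \<noteq> Suc j" by blast
    then show ?thesis
    proof cases
      case 1 then have "swap_adj f j (Suc j) = f l'" by (simp add: swap_adj_def)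
      then show ?thesis using span_first_gen[of "Suc j" l "swap_adj f j"] assms(1) by simp
    next
      case 2 then have "swap_adj f j j = f l'" by (simp add: swap_adj_def)
      then show ?thesis using span_first_gen[of j l "swap_adj f j"] assms(1) by simp
    next
      case 3 then have "swap_adj f j l' = f l'" by (simp add: swap_adj_def)
      then show ?thesis using span_first_gen[of l' l "swap_adj f j"] that by simp
    qed
  qed
  show "(\<lambda>t. swap_adj f j l t - f l t) \<in> span_first f l" using assms(1)
    by (simp add: swap_adj_def span_first_zero)
qed

context
  fixes f j
  assumes A: "ip (gso f j) (gso f j) > 0" and C: "ip (gso f (Suc j)) (gso f (Suc j)) > 0"
begin

definition "swap_gso = (\<lambda>t. gso f (Suc j) t + mu f (Suc j) j * gso f j t)"
definition "swap_gso_Suc = (\<lambda>t. gso f j t - (ip (gso f j) swap_gso / ip swap_gso swap_gso) * swap_gso t)"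

lemma ip_vec_Suc_gso: "ip (f (Suc j)) (gso f j) = mu f (Suc j) j * ip (gso f j) (gso f j)"
  using A by (simp add: mu_def)

lemma ip_swap_gso_vec: "l < j \<Longrightarrow> ip swap_gso (f l) = 0"
  by (simp add: swap_gso_def ip_add_left ip_scale_left gso_orth_vec)

lemma ip_swap_gso:
  "ip swap_gso swap_gso = ip (gso f (Suc j)) (gso f (Suc j)) + (mu f (Suc j) j)^2 * ip (gso f j) (gso f j)"
  unfolding swap_gso_def
  by (simp add: ip_add_left ip_add_right ip_scale_left ip_scale_right gso_orth power2_eq_square)

lemma ip_swap_gso_pos: "ip swap_gso swap_gso > 0"
  using ip_swap_gso C A by (simp add: add_pos_nonneg)

lemma gso_swap_adj_at: "t < n \<Longrightarrow> gso (swap_adj f j) j t = swap_gso t"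
proof (rule sym, rule gso_unique)
  have sl: "span_first (swap_adj f j) j = span_first f j"
    by (rule span_first_vec_cong) (simp add: swap_adj_def)
  have "(\<lambda>t. f (Suc j) t - gso f (Suc j) t) \<in> span_first (gso f) (Suc j)"
    by (rule vec_minus_gso_in_span_gso)
  have e: "f (Suc j) t - swap_gso t = (\<Sum>l<j. mu f (Suc j) l * gso f l t)" for t
    by (simp add: swap_gso_def gso_unfold[of f "Suc j"])
  have "(\<lambda>t. \<Sum>l<j. mu f (Suc j) l * gso f l t) \<in> span_first (gso f) j"
    by (rule span_first_sum) (auto intro: span_first_scale span_first_gen)
  then have "(\<lambda>t. f (Suc j) t - swap_gso t) \<in> span_first f j" using span_first_gso_eq e by simp
  then show "(\<lambda>t. swap_adj f j j t - swap_gso t) \<in> span_first (swap_adj f j) j" using sl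
    by (simp add: swap_adj_def)
  show "ip swap_gso (swap_adj f j l) = 0" if "l < j" for l using that ip_swap_gso_vec
    by (simp add: swap_adj_def)
qed

lemma ip_gso_swap_gso: "ip (gso f j) swap_gso = mu f (Suc j) j * ip (gso f j) (gso f j)"
  unfolding swap_gso_def by (simp add: ip_add_right ip_scale_right gso_orth)

lemma ip_swap_gso_vec_Suc: "ip swap_gso (f (Suc j)) = ip swap_gso swap_gso"
proof -
  have "ip swap_gso (f (Suc j)) = ip (gso f (Suc j)) (f (Suc j)) + mu f (Suc j) j * ip (gso f j) (f (Suc j))"
    by (simp add: swap_gso_def ip_add_left ip_scale_left)
  also have "\<dots> = ip (gso f (Suc j)) (gso f (Suc j)) + (mu f (Suc j) j)^2 * ip (gso f j) (gso f j)"
    using ip_vec_gso_self[of f "Suc j"] ip_vec_Suc_gso by (simp add: ip_sym power2_eq_square)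
  finally show ?thesis using ip_swap_gso by simp
qed

lemma gso_swap_adj_at_Suc: "t < n \<Longrightarrow> gso (swap_adj f j) (Suc j) t = swap_gso_Suc t"
proof (rule sym, rule gso_unique)
  let ?c = "ip (gso f j) swap_gso / ip swap_gso swap_gso"
  have vin: "swap_gso \<in> span_first (swap_adj f j) (Suc j)"
    using gso_in_span_first[of "swap_adj f j" j]
    by (rule span_first_cong) (simp add: gso_swap_adj_at)
  have sl: "span_first (swap_adj f j) j = span_first f j"
    by (rule span_first_vec_cong) (simp add: swap_adj_def)
  have "(\<lambda>t. f j t - gso f j t) \<in> span_first (swap_adj f j) (Suc j)"
    using vec_minus_gso_in_span[of f j] sl span_first_mono[of j "Suc j" _ "swap_adj f j"] by auto
  then have "(\<lambda>t. (f j t - gso f j t) + ?c * swap_gso t) \<in> span_first (swap_adj f j) (Suc j)"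
    by (intro span_first_add span_first_scale vin)
  then show "(\<lambda>t. swap_adj f j (Suc j) t - swap_gso_Suc t) \<in> span_first (swap_adj f j) (Suc j)"
    by (rule span_first_cong) (simp add: swap_adj_def swap_gso_Suc_def)
  show "ip swap_gso_Suc (swap_adj f j l) = 0" if "l < Suc j" for l
  proof (cases "l = j")
    case True
    have "ip swap_gso_Suc (f (Suc j)) = ip (gso f j) (f (Suc j)) - ?c * ip swap_gso (f (Suc j))"
      by (simp only: swap_gso_Suc_def ip_diff_left ip_scale_left)
    also have "\<dots> = 0" using ip_swap_gso_vec_Suc ip_gso_swap_gso ip_vec_Suc_gso ip_swap_gso_pos
      by (simp add: ip_sym)
    finally show ?thesis using True by (simp add: swap_adj_def)
  next
    case False
    then have "l < j" using that by simp
    have "ip swap_gso_Suc (f l) = ip (gso f j) (f l) - ?c * ip swap_gso (f l)"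
      by (simp only: swap_gso_Suc_def ip_diff_left ip_scale_left)
    then show ?thesis using \<open>l < j\<close> False
      by (simp add: swap_adj_def gso_orth_vec ip_swap_gso_vec)
  qed
qed

lemma ip_swap_gso_Suc:
  "ip swap_gso_Suc swap_gso_Suc
    = ip (gso f j) (gso f j) * ip (gso f (Suc j)) (gso f (Suc j)) / ip swap_gso swap_gso"
proof -
  let ?A = "ip (gso f j) (gso f j)" and ?C = "ip (gso f (Suc j)) (gso f (Suc j))"
    and ?V = "ip swap_gso swap_gso"
  have "ip swap_gso_Suc swap_gso_Suc
      = ?A - 2 * (ip (gso f j) swap_gso / ?V) * ip (gso f j) swap_gso + (ip (gso f j) swap_gso / ?V)^2 * ?V"
    unfolding swap_gso_Suc_def ip_diff_scale_self by simp
  also have "\<dots> = ?A - (mu f (Suc j) j * ?A)^2 / ?V" using ip_swap_gso_pos ip_gso_swap_gso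
    by (simp add: power2_eq_square field_simps)
  also have "\<dots> = ?A * ?C / ?V" using ip_swap_gso_pos ip_swap_gso
    by (simp add: power2_eq_square field_simps)
  finally show ?thesis .
qed

end

end

lemma prod_remove_adjacent:
  fixes h :: "nat \<Rightarrow> 'a::comm_monoid_mult"
  assumes "Suc j < r"
  shows "(\<Prod>k<r. h k) = (\<Prod>k\<in>{..<r}-{j, Suc j}. h k) * (h j * h (Suc j))"
proof -
  have "(\<Prod>k<r. h k) = h j * (\<Prod>k\<in>{..<r}-{j}. h k)" using assms by (intro prod.remove) auto
  also have "(\<Prod>k\<in>{..<r}-{j}. h k) = h (Suc j) * (\<Prod>k\<in>{..<r}-{j}-{Suc j}. h k)"
    using assms by (intro prod.remove) auto
  also have "{..<r}-{j}-{Suc j} = {..<r}-{j, Suc j}" by auto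
  finally show ?thesis by (simp add: mult_ac)
qed

lemma prod_powers_decrease_adjacent:
  fixes g h :: "nat \<Rightarrow> real"
  assumes j: "Suc j < r" and pos: "\<forall>k<r. 0 < g k"
    and less: "h j < g j" "0 < h j" and prod_eq: "h j * h (Suc j) = g j * g (Suc j)"
    and same: "\<And>k. k \<noteq> j \<Longrightarrow> k \<noteq> Suc j \<Longrightarrow> h k = g k"
  shows "(\<Prod>k<r. h k) = (\<Prod>k<r. g k)"
    and "(\<Prod>k<r. h k ^ (r - k)) < (\<Prod>k<r. g k ^ (r - k))"
proof -
  have rest: "(\<Prod>k\<in>{..<r}-{j, Suc j}. f k (h k)) = (\<Prod>k\<in>{..<r}-{j, Suc j}. f k (g k))"
    for f :: "nat \<Rightarrow> real \<Rightarrow> real"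
    by (rule prod.cong) (auto simp: same)
  show "(\<Prod>k<r. h k) = (\<Prod>k<r. g k)"
    using rest[of "\<lambda>_ x. x"] prod_eq by (simp add: prod_remove_adjacent[OF j])
  define e where "e = r - Suc j"
  have "r - j = Suc e" using j by (simp add: e_def)
  then have split: "f j ^ (r - j) * f (Suc j) ^ (r - Suc j) = f j * (f j * f (Suc j)) ^ e"
    for f :: "nat \<Rightarrow> real"
    by (simp add: e_def power_mult_distrib)
  have "0 < (\<Prod>k\<in>{..<r}-{j, Suc j}. g k ^ (r - k))" using pos by (intro prod_pos) auto
  moreover have "h j * (h j * h (Suc j)) ^ e < g j * (g j * g (Suc j)) ^ e"
    using less pos j by (simp add: prod_eq)
  ultimately show "(\<Prod>k<r. h k ^ (r - k)) < (\<Prod>k<r. g k ^ (r - k))"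
    using rest[of "\<lambda>k x. x ^ (r - k)"] by (simp add: prod_remove_adjacent[OF j] split)
qed

lemma finite_bounded_int_matrices:
  "finite {B :: nat \<Rightarrow> nat \<Rightarrow> int. (\<forall>k t. \<not> (k < r \<and> t < n) \<longrightarrow> B k t = 0)
                                   \<and> (\<forall>k<r. \<forall>t<n. \<bar>B k t\<bar> \<le> K)}"
proof (rule finite_subset)
  let ?D = "{..<r} \<times> {..<n}"
  let ?mat = "\<lambda>g k t. if (k, t) \<in> ?D then g (k, t) else 0"
  show "finite (?mat ` PiE ?D (\<lambda>_. {-K..K}))"
    by (intro finite_imageI finite_PiE) auto
  show "{B. (\<forall>k t. \<not> (k < r \<and> t < n) \<longrightarrow> B k t = 0) \<and> (\<forall>k<r. \<forall>t<n. \<bar>B k t\<bar> \<le> K)}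
        \<subseteq> ?mat ` PiE ?D (\<lambda>_. {-K..K})"
  proof
    fix B assume "B \<in> {B. (\<forall>k t. \<not> (k < r \<and> t < n) \<longrightarrow> B k t = 0) \<and> (\<forall>k<r. \<forall>t<n. \<bar>B k t\<bar> \<le> K)}"
    then have "B = ?mat (restrict (case_prod B) ?D)"
      and "restrict (case_prod B) ?D \<in> PiE ?D (\<lambda>_. {-K..K})"
      by (auto simp: fun_eq_iff abs_le_iff, smt (verit))
    then show "B \<in> ?mat ` PiE ?D (\<lambda>_. {-K..K})" by blast
  qed
qed

text \<open>Integer bases are \<open>r \<times> n\<close> matrices given by their rows. The predicate \<open>admissible\<close> stands
  for any property preserved by the two LLL moves, adding integer combinations of earlier rows and
  swapping adjacent rows; typically, that the rows generate a given lattice.\<close>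

locale lll_setting = weighted_inner +
  fixes r :: nat and admissible :: "(nat \<Rightarrow> nat \<Rightarrow> int) \<Rightarrow> bool"
  assumes admissible_triangular: "\<And>B B' c. admissible B \<Longrightarrow>
      (\<And>k t. k < r \<Longrightarrow> t < n \<Longrightarrow> B' k t = B k t + (\<Sum>l<k. c k l * B l t)) \<Longrightarrow> admissible B'"
    and admissible_swap_adj: "\<And>B j. admissible B \<Longrightarrow> Suc j < r \<Longrightarrow> admissible (swap_adj B j)"
begin

definition real_rows :: "(nat \<Rightarrow> nat \<Rightarrow> int) \<Rightarrow> nat \<Rightarrow> nat \<Rightarrow> real" where
  "real_rows B = (\<lambda>l t. real_of_int (B l t))"

definition gso_sq :: "(nat \<Rightarrow> nat \<Rightarrow> int) \<Rightarrow> nat \<Rightarrow> real" where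
  "gso_sq B k = ip (gso (real_rows B) k) (gso (real_rows B) k)"

lemma gso_sq_nonneg: "gso_sq B k \<ge> 0" unfolding gso_sq_def by (rule ip_nonneg)

lemma real_rows_swap_adj: "real_rows (swap_adj B j) = swap_adj (real_rows B) j"
  unfolding real_rows_def swap_adj_def by (rule ext)+ simp

lemma ip_of_int_add_comb:
  "ip (\<lambda>t. of_int (y t + (\<Sum>l\<in>L. c l * B l t))) g
     = ip (\<lambda>t. of_int (y t)) g + (\<Sum>l\<in>L. of_int (c l) * ip (real_rows B l) g)"
proof -
  have "(\<lambda>t. of_int (y t + (\<Sum>l\<in>L. c l * B l t))) = (\<lambda>t. of_int (y t) + (\<Sum>l\<in>L. of_int (c l) * real_rows B l t))"
    by (simp add: real_rows_def)
  then show ?thesis by (simp only: ip_add_left ip_sum_left ip_scale_left)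
qed

lemma nearest_plane_step:
  fixes x :: "nat \<Rightarrow> int"
  obtains q where "\<bar>ip (\<lambda>t. of_int (x t + q * B j t)) (gso (real_rows B) j)\<bar> \<le> gso_sq B j / 2"
proof (cases "gso_sq B j = 0")
  case True
  then have "ip y (gso (real_rows B) j) = 0" for y
    using ip_self_zero_right unfolding gso_sq_def by blast
  then show ?thesis using that[of 0] gso_sq_nonneg[of B j] by simp
next
  case False
  then have pos: "gso_sq B j > 0" using gso_sq_nonneg[of B j] by simp
  let ?g = "gso (real_rows B) j"
  define q where "q = ip (\<lambda>t. of_int (x t)) ?g / gso_sq B j"
  have "ip (\<lambda>t. of_int (x t + - round q * B j t)) ?g
      = ip (\<lambda>t. of_int (x t)) ?g + of_int (- round q) * ip (real_rows B j) ?g"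
    using ip_of_int_add_comb[where y = x and L = "{j}" and c = "\<lambda>_. - round q" and B = B and g = ?g]
    by simp
  also have "ip (real_rows B j) ?g = gso_sq B j" unfolding gso_sq_def by (rule ip_vec_gso_self)
  also have "ip (\<lambda>t. of_int (x t)) ?g + of_int (- round q) * gso_sq B j = (q - of_int (round q)) * gso_sq B j"
    using pos by (simp add: q_def field_simps)
  finally have "ip (\<lambda>t. of_int (x t + - round q * B j t)) ?g = (q - of_int (round q)) * gso_sq B j" .
  moreover have "\<bar>q - of_int (round q)\<bar> \<le> 1/2"
    using of_int_round_abs_le[of q] by (simp add: abs_minus_commute)
  ultimately show ?thesis
    using pos by (intro that[of "- round q"]) (simp add: abs_mult mult_right_mono)
qed

text \<open>Babai's nearest plane algorithm: fix the coefficient along \<open>gso k\<close> first; adding multiples of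
  earlier vectors does not change it afterwards.\<close>

lemma nearest_plane:
  fixes x :: "nat \<Rightarrow> int"
  shows "\<exists>c. \<forall>l<k. \<bar>ip (\<lambda>t. of_int (x t + (\<Sum>l'<k. c l' * B l' t))) (gso (real_rows B) l)\<bar> \<le> gso_sq B l / 2"
proof (induction k arbitrary: x)
  case (Suc k)
  obtain q where q: "\<bar>ip (\<lambda>t. of_int (x t + q * B k t)) (gso (real_rows B) k)\<bar> \<le> gso_sq B k / 2"
    by (rule nearest_plane_step)
  obtain c where c: "\<forall>l<k. \<bar>ip (\<lambda>t. of_int (x t + q * B k t + (\<Sum>l'<k. c l' * B l' t))) (gso (real_rows B) l)\<bar>
      \<le> gso_sq B l / 2"
    using Suc.IH[of "\<lambda>t. x t + q * B k t"] by blast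
  define c' where "c' = c(k := q)"
  have "(\<Sum>l'<k. c' l' * B l' t) = (\<Sum>l'<k. c l' * B l' t)" for t
    by (rule sum.cong) (simp_all add: c'_def)
  then have c': "x t + (\<Sum>l'<Suc k. c' l' * B l' t) = x t + q * B k t + (\<Sum>l'<k. c l' * B l' t)" for t
    by (simp add: c'_def)
  have k: "ip (\<lambda>t. of_int (x t + q * B k t + (\<Sum>l'<k. c l' * B l' t))) (gso (real_rows B) k)
      = ip (\<lambda>t. of_int (x t + q * B k t)) (gso (real_rows B) k)"
    by (subst ip_of_int_add_comb) (auto simp: ip_vec_gso_later intro!: sum.neutral)
  show ?case
  proof (intro exI[of _ c'] allI impI)
    fix l assume "l < Suc k"
    then show "\<bar>ip (\<lambda>t. of_int (x t + (\<Sum>l'<Suc k. c' l' * B l' t))) (gso (real_rows B) l)\<bar> \<le> gso_sq B l / 2"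
      unfolding c' using q c k by (cases "l = k") auto
  qed
qed simp

definition add_earlier :: "(nat \<Rightarrow> nat \<Rightarrow> int) \<Rightarrow> (nat \<Rightarrow> nat \<Rightarrow> int) \<Rightarrow> nat \<Rightarrow> nat \<Rightarrow> int" where
  "add_earlier B c = (\<lambda>k t. if k < r \<and> t < n then B k t + (\<Sum>l<k. c k l * B l t) else 0)"

lemma gso_add_earlier:
  assumes "k < r" "t < n"
  shows "gso (real_rows (add_earlier B c)) k t = gso (real_rows B) k t"
proof (rule gso_triangular[OF _ assms(2)])
  fix l assume "l \<le> k"
  then have "l < r" using assms by simp
  show "(\<lambda>t. real_rows (add_earlier B c) l t - real_rows B l t) \<in> span_first (real_rows B) l"
    unfolding span_first_def
    by (rule CollectI, rule exI[of _ "\<lambda>l'. of_int (c l l')"]) (simp add: add_earlier_def real_rows_def \<open>l < r\<close>)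
qed

lemma gso_sq_add_earlier: "k < r \<Longrightarrow> gso_sq (add_earlier B c) k = gso_sq B k"
  unfolding gso_sq_def
  by (rule trans[OF ip_cong_left ip_cong_right]) (simp_all add: gso_add_earlier)

lemma admissible_add_earlier: "admissible B \<Longrightarrow> admissible (add_earlier B c)"
  by (rule admissible_triangular[of B _ c]) (simp_all add: add_earlier_def)

lemma mu_add_earlier:
  assumes "k < r" "l < k"
  shows "mu (real_rows (add_earlier B c)) k l = ip (real_rows (add_earlier B c) k) (gso (real_rows B) l) / gso_sq B l"
proof -
  have lr: "l < r" using assms by simp
  have "ip (real_rows (add_earlier B c) k) (gso (real_rows (add_earlier B c)) l)
      = ip (real_rows (add_earlier B c) k) (gso (real_rows B) l)"
    by (rule ip_cong_right) (simp add: gso_add_earlier lr)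
  then show ?thesis using gso_sq_add_earlier[OF lr, of B c] unfolding mu_def gso_sq_def by simp
qed

lemma gso_sq_swap_adj:
  assumes "gso_sq B j > 0" "gso_sq B (Suc j) > 0"
  shows "gso_sq (swap_adj B j) j = gso_sq B (Suc j) + (mu (real_rows B) (Suc j) j)^2 * gso_sq B j"
    and "gso_sq (swap_adj B j) (Suc j) = gso_sq B j * gso_sq B (Suc j) / gso_sq (swap_adj B j) j"
    and "i \<noteq> j \<Longrightarrow> i \<noteq> Suc j \<Longrightarrow> gso_sq (swap_adj B j) i = gso_sq B i"
proof -
  have A: "ip (gso (real_rows B) j) (gso (real_rows B) j) > 0"
    and C: "ip (gso (real_rows B) (Suc j)) (gso (real_rows B) (Suc j)) > 0"
    using assms unfolding gso_sq_def by auto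
  have gj: "gso_sq (swap_adj B j) j = ip (swap_gso (real_rows B) j) (swap_gso (real_rows B) j)"
    unfolding gso_sq_def real_rows_swap_adj
    by (rule trans[OF ip_cong_left ip_cong_right]) (simp_all add: gso_swap_adj_at[OF A C])
  show 1: "gso_sq (swap_adj B j) j = gso_sq B (Suc j) + (mu (real_rows B) (Suc j) j)^2 * gso_sq B j"
    unfolding gj ip_swap_gso[OF A C] by (simp add: gso_sq_def)
  have "gso_sq (swap_adj B j) (Suc j) = ip (swap_gso_Suc (real_rows B) j) (swap_gso_Suc (real_rows B) j)"
    unfolding gso_sq_def real_rows_swap_adj
    by (rule trans[OF ip_cong_left ip_cong_right]) (simp_all add: gso_swap_adj_at_Suc[OF A C])
  then show "gso_sq (swap_adj B j) (Suc j) = gso_sq B j * gso_sq B (Suc j) / gso_sq (swap_adj B j) j"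
    unfolding ip_swap_gso_Suc[OF A C] gj by (simp add: gso_sq_def)
  assume "i \<noteq> j" "i \<noteq> Suc j"
  then consider "i < j" | "Suc j < i" by linarith
  then show "gso_sq (swap_adj B j) i = gso_sq B i"
  proof cases
    case 1 then show ?thesis unfolding gso_sq_def real_rows_swap_adj
      by (rule_tac trans[OF ip_cong_left ip_cong_right]) (simp_all add: gso_swap_adj_less)
  next
    case 2 then show ?thesis unfolding gso_sq_def real_rows_swap_adj
      by (rule_tac trans[OF ip_cong_left ip_cong_right]) (simp_all add: gso_swap_adj_greater)
  qed
qed

definition size_reduced :: "(nat \<Rightarrow> nat \<Rightarrow> int) \<Rightarrow> bool" where
  "size_reduced B \<longleftrightarrow> (\<forall>k<r. \<forall>l<k. \<bar>mu (real_rows B) k l\<bar> \<le> 1/2)"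

definition lovasz :: "(nat \<Rightarrow> nat \<Rightarrow> int) \<Rightarrow> bool" where
  "lovasz B \<longleftrightarrow> (\<forall>j. Suc j < r \<longrightarrow>
     3/4 * gso_sq B j \<le> gso_sq B (Suc j) + (mu (real_rows B) (Suc j) j)^2 * gso_sq B j)"

lemma size_reduced_mu_sq:
  assumes "size_reduced B" "k < r" "l < k"
  shows "(mu (real_rows B) k l)^2 \<le> 1/4"
proof -
  have "\<bar>mu (real_rows B) k l\<bar>^2 \<le> (1/2)^2"
    using assms unfolding size_reduced_def by (intro power_mono) auto
  then show ?thesis by (simp add: power2_eq_square)
qed

lemma exists_size_reduction:
  assumes "\<forall>l<r. gso_sq B l > 0"
  shows "\<exists>c. size_reduced (add_earlier B c)"
proof -
  let ?reduced = "\<lambda>k c l. \<bar>ip (\<lambda>t. of_int (B k t + (\<Sum>l'<k. c l' * B l' t))) (gso (real_rows B) l)\<bar> \<le> gso_sq B l / 2"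
  have "\<forall>k. \<exists>c. \<forall>l<k. ?reduced k c l"
    by (intro allI nearest_plane)
  then obtain c where c: "\<And>k l. l < k \<Longrightarrow> ?reduced k (c k) l"
    by (auto dest!: choice)
  have "\<bar>mu (real_rows (add_earlier B c)) k l\<bar> \<le> 1/2" if "k < r" "l < k" for k l
  proof -
    have pos: "gso_sq B l > 0" using assms that by simp
    have "ip (real_rows (add_earlier B c) k) (gso (real_rows B) l)
        = ip (\<lambda>t. of_int (B k t + (\<Sum>l'<k. c k l' * B l' t))) (gso (real_rows B) l)"
      by (rule ip_cong_left) (simp add: add_earlier_def real_rows_def that)
    then have "\<bar>ip (real_rows (add_earlier B c) k) (gso (real_rows B) l)\<bar> \<le> gso_sq B l / 2"
      using c[OF that(2)] by simp
    then show ?thesis using mu_add_earlier[OF that] pos by (simp add: abs_divide pos_divide_le_eq)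
  qed
  then show ?thesis unfolding size_reduced_def by blast
qed

definition supported :: "(nat \<Rightarrow> nat \<Rightarrow> int) \<Rightarrow> bool" where
  "supported B \<longleftrightarrow> (\<forall>k t. \<not> (k < r \<and> t < n) \<longrightarrow> B k t = 0)"

definition potential :: "(nat \<Rightarrow> nat \<Rightarrow> int) \<Rightarrow> real" where
  "potential B = (\<Prod>k<r. gso_sq B k ^ (r - k))"

text \<open>Existence of LLL-reduced bases without running the algorithm: among the size-reduced
  admissible bases whose Gram-Schmidt norms stay below those of \<open>U\<close> in sum and product (a finite
  set), one minimising the LLL potential satisfies the Lovasz condition, because a violating
  adjacent swap followed by size reduction would decrease the potential.\<close>

definition candidates :: "(nat \<Rightarrow> nat \<Rightarrow> int) \<Rightarrow> (nat \<Rightarrow> nat \<Rightarrow> int) set" where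
  "candidates U = {B. admissible B \<and> supported B \<and> size_reduced B
     \<and> (\<forall>k<r. 0 < gso_sq B k \<and> gso_sq B k \<le> (\<Sum>l<r. gso_sq U l))
     \<and> (\<Prod>k<r. gso_sq B k) \<le> (\<Prod>k<r. gso_sq U k)}"

lemma add_earlier_in_candidates:
  assumes "admissible B" and "\<forall>k<r. 0 < gso_sq B k \<and> gso_sq B k \<le> (\<Sum>l<r. gso_sq U l)"
    and "(\<Prod>k<r. gso_sq B k) \<le> (\<Prod>k<r. gso_sq U k)"
  obtains c where "add_earlier B c \<in> candidates U"
proof -
  obtain c where "size_reduced (add_earlier B c)"
    using exists_size_reduction assms(2) by blast
  moreover have "(\<Prod>k<r. gso_sq (add_earlier B c) k) = (\<Prod>k<r. gso_sq B k)"
    by (rule prod.cong) (simp_all add: gso_sq_add_earlier)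
  moreover have "supported (add_earlier B c)" by (simp add: supported_def add_earlier_def)
  ultimately have "add_earlier B c \<in> candidates U"
    using assms by (auto simp: candidates_def gso_sq_add_earlier admissible_add_earlier)
  then show ?thesis by (rule that)
qed

lemma candidates_nonempty:
  assumes "admissible U" and "\<forall>k<r. gso_sq U k > 0"
  shows "candidates U \<noteq> {}"
proof -
  have "gso_sq U k \<le> (\<Sum>l<r. gso_sq U l)" if "k < r" for k
    using that gso_sq_nonneg by (intro member_le_sum) auto
  then obtain c where "add_earlier U c \<in> candidates U"
    using add_earlier_in_candidates[of U U] assms by auto
  then show ?thesis by blast
qed

lemma candidate_row_bound:
  assumes B: "B \<in> candidates U" and "k < r"
  shows "ip (real_rows B k) (real_rows B k) \<le> (1 + real r) * (\<Sum>l<r. gso_sq U l)"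
proof -
  define M where "M = (\<Sum>l<r. gso_sq U l)"
  have bounded: "\<forall>k<r. 0 < gso_sq B k \<and> gso_sq B k \<le> M" and "size_reduced B"
    using B unfolding candidates_def M_def by auto
  have "M \<ge> 0" using bounded \<open>k < r\<close> by force
  have "ip (real_rows B k) (real_rows B k) = gso_sq B k + (\<Sum>l<k. (mu (real_rows B) k l)^2 * gso_sq B l)"
    unfolding gso_sq_def by (rule ip_self_gso_decomp)
  also have "\<dots> \<le> M + (\<Sum>l<k. M)"
  proof (intro add_mono sum_mono)
    fix l assume "l \<in> {..<k}"
    then have l: "l < k" "l < r" using \<open>k < r\<close> by auto
    have "(mu (real_rows B) k l)^2 \<le> 1"
      using size_reduced_mu_sq[OF \<open>size_reduced B\<close> \<open>k < r\<close> l(1)] by linarith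
    moreover have "0 \<le> gso_sq B l" "gso_sq B l \<le> M" using bounded l(2) by auto
    ultimately show "(mu (real_rows B) k l)^2 * gso_sq B l \<le> M"
      using mult_mono[of "(mu (real_rows B) k l)^2" 1 "gso_sq B l" M] by simp
  qed (use bounded \<open>k < r\<close> in auto)
  also have "\<dots> \<le> (1 + real r) * M"
    using \<open>k < r\<close> \<open>M \<ge> 0\<close> mult_right_mono[of "real k" "real r" M] by (simp add: algebra_simps)
  finally show ?thesis unfolding M_def .
qed

lemma candidate_entry_bound:
  assumes "B \<in> candidates U" and "k < r" "t < n"
  shows "\<bar>B k t\<bar> \<le> \<lceil>(1 + real r) * (\<Sum>l<r. gso_sq U l)\<rceil>"
proof -
  have "\<bar>B k t\<bar> \<le> (B k t)^2"
  proof (cases "B k t = 0")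
    case False
    then have "\<bar>B k t\<bar> * 1 \<le> \<bar>B k t\<bar> * \<bar>B k t\<bar>" by (intro mult_left_mono) auto
    then show ?thesis by (simp add: power2_eq_square abs_mult_self_eq)
  qed simp
  then have "real_of_int \<bar>B k t\<bar> \<le> (real_of_int (B k t))^2"
    by (metis of_int_le_iff of_int_power)
  also have "\<dots> \<le> w t * (real_rows B k t)^2"
    using mult_right_mono[of 1 "w t" "(real_rows B k t)^2"] weight_ge_1[OF \<open>t < n\<close>]
    by (simp add: real_rows_def)
  also have "\<dots> \<le> ip (real_rows B k) (real_rows B k)"
    by (rule ip_self_ge_coord[OF \<open>t < n\<close>])
  also have "\<dots> \<le> (1 + real r) * (\<Sum>l<r. gso_sq U l)"
    using candidate_row_bound assms(1,2) .
  finally show ?thesis by linarith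
qed

lemma candidates_finite: "finite (candidates U)"
proof (rule finite_subset[OF _ finite_bounded_int_matrices])
  show "candidates U \<subseteq> {B. (\<forall>k t. \<not> (k < r \<and> t < n) \<longrightarrow> B k t = 0)
      \<and> (\<forall>k<r. \<forall>t<n. \<bar>B k t\<bar> \<le> \<lceil>(1 + real r) * (\<Sum>l<r. gso_sq U l)\<rceil>)}"
    using candidate_entry_bound by (auto simp: candidates_def supported_def)
qed

lemma swap_adj_if_not_lovasz:
  assumes B: "B \<in> candidates U" and j: "Suc j < r"
    and fail: "gso_sq B (Suc j) + (mu (real_rows B) (Suc j) j)^2 * gso_sq B j < 3/4 * gso_sq B j"
  shows "\<forall>k<r. 0 < gso_sq (swap_adj B j) k \<and> gso_sq (swap_adj B j) k \<le> (\<Sum>l<r. gso_sq U l)"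
    and "(\<Prod>k<r. gso_sq (swap_adj B j) k) = (\<Prod>k<r. gso_sq B k)"
    and "(\<Prod>k<r. gso_sq (swap_adj B j) k ^ (r - k)) < potential B"
proof -
  define M where "M = (\<Sum>l<r. gso_sq U l)"
  let ?B1 = "swap_adj B j" and ?A = "gso_sq B j" and ?C = "gso_sq B (Suc j)"
  have bounded: "\<forall>k<r. 0 < gso_sq B k \<and> gso_sq B k \<le> M"
    using B unfolding candidates_def M_def by auto
  then have pos: "\<forall>k<r. 0 < gso_sq B k" and A: "0 < ?A" "?A \<le> M" and C: "0 < ?C"
    using j by auto
  have B1: "gso_sq ?B1 j = ?C + (mu (real_rows B) (Suc j) j)^2 * ?A"
    "gso_sq ?B1 (Suc j) = ?A * ?C / gso_sq ?B1 j"
    "\<And>k. k \<noteq> j \<Longrightarrow> k \<noteq> Suc j \<Longrightarrow> gso_sq ?B1 k = gso_sq B k"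
    using gso_sq_swap_adj[OF A(1) C] by simp_all
  have B1_j: "0 < gso_sq ?B1 j" "?C \<le> gso_sq ?B1 j" "gso_sq ?B1 j < ?A"
    using B1(1) A C fail by (simp_all add: add_pos_nonneg)
  have B1_Suc_j: "0 < gso_sq ?B1 (Suc j)" "gso_sq ?B1 (Suc j) \<le> ?A"
    using B1(2) B1_j A C by (simp_all add: divide_le_eq mult_left_mono)
  have prod_eq: "gso_sq ?B1 j * gso_sq ?B1 (Suc j) = ?A * ?C"
    using B1(2) B1_j by simp
  note decrease = prod_powers_decrease_adjacent[OF j pos B1_j(3,1) prod_eq B1(3)]
  have "0 < gso_sq ?B1 k \<and> gso_sq ?B1 k \<le> M" if "k < r" for k
  proof -
    consider "k = j" | "k = Suc j" | "k \<noteq> j" "k \<noteq> Suc j" by blast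
    then show ?thesis
    proof cases
      case 1 then show ?thesis using B1_j A by simp
    next
      case 2 then show ?thesis using B1_Suc_j A by simp
    next
      case 3 then show ?thesis using B1(3) bounded that by simp
    qed
  qed
  then show "\<forall>k<r. 0 < gso_sq ?B1 k \<and> gso_sq ?B1 k \<le> (\<Sum>l<r. gso_sq U l)"
    unfolding M_def by blast
  show "(\<Prod>k<r. gso_sq ?B1 k) = (\<Prod>k<r. gso_sq B k)" by (rule decrease(1))
  show "(\<Prod>k<r. gso_sq ?B1 k ^ (r - k)) < potential B"
    unfolding potential_def by (rule decrease(2))
qed

lemma potential_minimal_lovasz:
  assumes B: "B \<in> candidates U" and min: "\<And>B'. B' \<in> candidates U \<Longrightarrow> potential B \<le> potential B'"
  shows "lovasz B"
  unfolding lovasz_def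
proof (intro allI impI)
  fix j assume j: "Suc j < r"
  show "3/4 * gso_sq B j \<le> gso_sq B (Suc j) + (mu (real_rows B) (Suc j) j)^2 * gso_sq B j"
  proof (rule ccontr)
    assume "\<not> ?thesis"
    then have swap: "\<forall>k<r. 0 < gso_sq (swap_adj B j) k \<and> gso_sq (swap_adj B j) k \<le> (\<Sum>l<r. gso_sq U l)"
      "(\<Prod>k<r. gso_sq (swap_adj B j) k) = (\<Prod>k<r. gso_sq B k)"
      "(\<Prod>k<r. gso_sq (swap_adj B j) k ^ (r - k)) < potential B"
      using swap_adj_if_not_lovasz[OF B j] by auto
    have "admissible (swap_adj B j)" "(\<Prod>k<r. gso_sq (swap_adj B j) k) \<le> (\<Prod>k<r. gso_sq U k)"
      using B admissible_swap_adj[OF _ j] swap(2) unfolding candidates_def by auto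
    then obtain c where "add_earlier (swap_adj B j) c \<in> candidates U"
      using add_earlier_in_candidates swap(1) by blast
    then have "potential B \<le> potential (add_earlier (swap_adj B j) c)" by (rule min)
    also have "\<dots> = (\<Prod>k<r. gso_sq (swap_adj B j) k ^ (r - k))"
      unfolding potential_def by (rule prod.cong) (simp_all add: gso_sq_add_earlier)
    finally show False using swap(3) by simp
  qed
qed

lemma gso_sq_le_double_next:
  assumes "size_reduced B" "lovasz B" "Suc j < r"
  shows "gso_sq B j \<le> 2 * gso_sq B (Suc j)"
proof -
  have "(mu (real_rows B) (Suc j) j)^2 * gso_sq B j \<le> 1/4 * gso_sq B j"
    using size_reduced_mu_sq[OF assms(1,3)] gso_sq_nonneg by (intro mult_right_mono) auto
  then show ?thesis using assms(2,3) unfolding lovasz_def by force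
qed

lemma gso_sq_geometric:
  assumes "size_reduced B" "lovasz B" "l \<le> k" "k < r"
  shows "gso_sq B l \<le> 2^(k - l) * gso_sq B k"
  using assms(3,4)
proof (induction k)
  case (Suc k)
  show ?case
  proof (cases "l = Suc k")
    case False
    then have "l \<le> k" using Suc.prems by simp
    then have "gso_sq B l \<le> 2^(k - l) * gso_sq B k" using Suc by simp
    also have "\<dots> \<le> 2^(k - l) * (2 * gso_sq B (Suc k))"
      using gso_sq_le_double_next[OF assms(1,2) Suc.prems(2)] by simp
    also have "\<dots> = 2^(Suc k - l) * gso_sq B (Suc k)" using \<open>l \<le> k\<close> by (simp add: Suc_diff_le)
    finally show ?thesis .
  qed simp
qed simp

lemma reduced_row_bound:
  assumes "size_reduced B" "lovasz B" "\<forall>k<r. gso_sq B k > 0" "k < r"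
  shows "ip (real_rows B k) (real_rows B k) \<le> 2^(2*k+1) * gso_sq B k"
proof -
  have pos: "gso_sq B k > 0" using assms by auto
  have "ip (real_rows B k) (real_rows B k) = gso_sq B k + (\<Sum>l<k. (mu (real_rows B) k l)^2 * gso_sq B l)"
    unfolding gso_sq_def by (rule ip_self_gso_decomp)
  also have "\<dots> \<le> gso_sq B k + (\<Sum>l<k. 2^k * gso_sq B k)"
  proof (intro add_left_mono sum_mono)
    fix l assume "l \<in> {..<k}"
    then have "(mu (real_rows B) k l)^2 \<le> 1"
      using size_reduced_mu_sq[OF assms(1,4), of l] by simp
    then have "(mu (real_rows B) k l)^2 * gso_sq B l \<le> 1 * gso_sq B l"
      using gso_sq_nonneg by (intro mult_right_mono) auto
    also have "\<dots> \<le> 2^(k - l) * gso_sq B k"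
      using gso_sq_geometric[OF assms(1,2)] \<open>l \<in> {..<k}\<close> assms(4) by simp
    also have "\<dots> \<le> 2^k * gso_sq B k"
      using pos by (intro mult_right_mono power_increasing) auto
    finally show "(mu (real_rows B) k l)^2 * gso_sq B l \<le> 2^k * gso_sq B k" .
  qed
  also have "\<dots> = (1 + real k * 2^k) * gso_sq B k" by (simp add: algebra_simps)
  also have "\<dots> \<le> 2^(2*k+1) * gso_sq B k"
  proof (intro mult_right_mono)
    have "real k * 2^k \<le> 2^k * 2^k"
      using of_nat_less_two_power[of k] by (intro mult_right_mono) auto
    also have "\<dots> = 2^(2*k)" by (simp add: power_add[symmetric] mult_2)
    finally have "real k * 2^k \<le> 2^(2*k)" .
    moreover have "(1::real) \<le> 2^(2*k)" by simp
    moreover have "(2::real)^(2*k+1) = 2 * 2^(2*k)" by simp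
    ultimately show "1 + real k * 2^k \<le> (2::real)^(2*k+1)" by linarith
  qed (use pos in auto)
  finally show ?thesis .
qed

theorem lll_exists:
  assumes "admissible U" and "\<forall>k<r. gso_sq U k > 0"
  obtains B where "admissible B" "\<forall>k<r. gso_sq B k > 0"
    "(\<Prod>k<r. gso_sq B k) \<le> (\<Prod>k<r. gso_sq U k)"
    "\<forall>k<r. ip (real_rows B k) (real_rows B k) \<le> 2^(2*k+1) * gso_sq B k"
proof -
  have fin: "finite (potential ` candidates U)" and ne: "potential ` candidates U \<noteq> {}"
    using candidates_finite candidates_nonempty[OF assms] by auto
  obtain B where B: "B \<in> candidates U" and "potential B = Min (potential ` candidates U)"
    using Min_in[OF fin ne] by auto
  then have "lovasz B" using fin by (intro potential_minimal_lovasz) auto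
  from B have "admissible B" "size_reduced B" "\<forall>k<r. gso_sq B k > 0"
    "(\<Prod>k<r. gso_sq B k) \<le> (\<Prod>k<r. gso_sq U k)"
    unfolding candidates_def by auto
  with \<open>lovasz B\<close> show ?thesis by (blast intro: that reduced_row_bound)
qed

end

lemma Gcd_image_lin_comb:
  fixes b :: "nat \<Rightarrow> int"
  assumes "finite P"
  shows "\<exists>a. (\<Sum>i\<in>P. a i * b i) = Gcd (b ` P)"
  using assms
proof (induction P rule: finite_induct)
  case (insert x P)
  then obtain a where a: "(\<Sum>i\<in>P. a i * b i) = Gcd (b ` P)" by blast
  obtain u v where uv: "u * b x + v * Gcd (b ` P) = gcd (b x) (Gcd (b ` P))"
    using bezout_int by blast
  define a' where "a' = (\<lambda>i. if i = x then u else v * a i)"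
  have "(\<Sum>i\<in>insert x P. a' i * b i) = u * b x + (\<Sum>i\<in>P. v * (a i * b i))"
    using insert.hyps by (simp add: a'_def mult.assoc cong: sum.cong) (rule sum.cong, auto)
  also have "\<dots> = u * b x + v * Gcd (b ` P)" by (simp add: sum_distrib_left[symmetric] a)
  finally show ?case using uv by auto
qed simp

lemma prod_two_power_odd: "(\<Prod>j<r. (2::real)^(2*j+1)) = 2^(r*r)"
  by (induction r) (simp_all add: power_add[symmetric] algebra_simps)

definition box_width :: "nat \<Rightarrow> (nat \<Rightarrow> int) \<Rightarrow> (nat \<Rightarrow> int) \<Rightarrow> int" where
  "box_width d N a = (\<Sum>i<d. \<bar>a i\<bar> * N i)"

definition box_offset :: "nat \<Rightarrow> (nat \<Rightarrow> int) \<Rightarrow> (nat \<Rightarrow> int) \<Rightarrow> int" where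
  "box_offset d N a = 1 - (\<Sum>i<d. if a i \<ge> 0 then a i else a i * N i)"

lemma box_width_ge_Min:
  assumes "\<forall>i<d. N i > 0" and "\<exists>i<d. a i \<noteq> 0"
  shows "Min (N ` {..<d}) \<le> box_width d N a"
proof -
  obtain i where i: "i < d" "a i \<noteq> 0" using assms(2) by auto
  have "Min (N ` {..<d}) \<le> N i" using i by (intro Min_le) auto
  also have "\<dots> \<le> \<bar>a i\<bar> * N i"
    using i assms(1) mult_right_mono[of 1 "\<bar>a i\<bar>" "N i"] by simp
  also have "\<dots> \<le> box_width d N a"
    unfolding box_width_def using i assms(1)
    by (intro member_le_sum[of i "{..<d}" "\<lambda>i. \<bar>a i\<bar> * N i"]) auto
  finally show ?thesis .
qed

lemma lin_form_shift_in_box: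
  assumes "\<exists>i<d. a i \<noteq> 0" and x: "\<forall>i<d. x i \<in> {1..N i}"
  shows "(\<Sum>i<d. a i * x i) + box_offset d N a \<in> {1..box_width d N a}"
proof -
  let ?t = "\<lambda>i. a i * x i - (if a i \<ge> 0 then a i else a i * N i)"
  have t: "0 \<le> ?t i \<and> ?t i \<le> \<bar>a i\<bar> * N i - \<bar>a i\<bar>" if "i < d" for i
  proof -
    have x_i: "1 \<le> x i" "x i \<le> N i" using x that by auto
    show ?thesis
    proof (cases "a i \<ge> 0")
      case True
      then show ?thesis using mult_left_mono[OF x_i(1) True] mult_left_mono[OF x_i(2) True] by simp
    next
      case False
      then have "a i \<le> 0" by simp
      then show ?thesis
        using mult_left_mono_neg[OF x_i(1), of "a i"] mult_left_mono_neg[OF x_i(2), of "a i"] x_i False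
        by (simp add: algebra_simps)
    qed
  qed
  have "1 \<le> (\<Sum>i<d. \<bar>a i\<bar>)"
  proof -
    obtain i where "i < d" "a i \<noteq> 0" using assms(1) by auto
    then have "1 \<le> \<bar>a i\<bar>" "\<bar>a i\<bar> \<le> (\<Sum>i<d. \<bar>a i\<bar>)" by (auto intro: member_le_sum)
    then show ?thesis by simp
  qed
  moreover have "(\<Sum>i<d. a i * x i) + box_offset d N a = 1 + (\<Sum>i<d. ?t i)"
    by (simp add: box_offset_def sum_subtractf)
  moreover have "0 \<le> (\<Sum>i<d. ?t i)" using t by (intro sum_nonneg) auto
  moreover have "(\<Sum>i<d. ?t i) \<le> box_width d N a - (\<Sum>i<d. \<bar>a i\<bar>)"
    using t by (auto simp: box_width_def sum_subtractf[symmetric] intro: sum_mono)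
  ultimately show ?thesis by simp
qed

lemma box_width_sq_le:
  "(real_of_int (box_width d N a))^2 \<le> real d * (\<Sum>i<d. (real_of_int (N i))^2 * real_of_int (a i) * real_of_int (a i))"
proof -
  have "(real_of_int (box_width d N a))^2 = (\<Sum>i<d. \<bar>real_of_int (a i)\<bar> * real_of_int (N i))^2"
    by (simp add: box_width_def)
  also have "\<dots> \<le> (\<Sum>i<d. (\<bar>real_of_int (a i)\<bar> * real_of_int (N i))^2) * real d"
    using sum_squared_le_sum_of_squares[of "\<lambda>i. \<bar>real_of_int (a i)\<bar> * real_of_int (N i)" "{..<d}"]
    by simp
  also have "(\<Sum>i<d. (\<bar>real_of_int (a i)\<bar> * real_of_int (N i))^2)
      = (\<Sum>i<d. (real_of_int (N i))^2 * real_of_int (a i) * real_of_int (a i))"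
    by (rule sum.cong) (simp_all add: power2_eq_square)
  finally show ?thesis by (simp add: mult.commute)
qed

lemma exists_enlarged_sides:
  fixes A :: "nat \<Rightarrow> int" and X c :: real
  assumes "0 < r" and A_pos: "\<forall>j<r. 0 < A j" and "0 < X" "1 \<le> c"
    and prod_le: "(\<Prod>j<r. real_of_int (A j)) \<le> c * X"
  obtains Ns where "\<forall>j<r. A j \<le> Ns j" "X/2 \<le> (\<Prod>j<r. real_of_int (Ns j))"
    "(\<Prod>j<r. real_of_int (Ns j)) \<le> c * X"
proof (cases "X/2 \<le> (\<Prod>j<r. real_of_int (A j))")
  case True
  then show ?thesis using prod_le by (intro that[of A]) auto
next
  case False
  define PA where "PA = (\<Prod>j<r. real_of_int (A j))"
  have PA_pos: "0 < PA" unfolding PA_def using A_pos by (intro prod_pos) auto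
  define K where "K = \<lceil>X / (2 * PA)\<rceil>"
  have K: "X / (2 * PA) \<le> real_of_int K" "real_of_int K < X / (2 * PA) + 1"
    unfolding K_def by linarith+
  have "0 < X / (2 * PA)" using \<open>0 < X\<close> PA_pos by simp
  then have "0 < real_of_int K" using K(1) by linarith
  then have "1 \<le> K" by simp
  define Ns where "Ns = A(0 := A 0 * K)"
  have "(\<Prod>j<r. real_of_int (Ns j)) = real_of_int (Ns 0) * (\<Prod>j\<in>{..<r}-{0}. real_of_int (A j))"
    using \<open>0 < r\<close> by (subst prod.remove[of _ 0]) (auto simp: Ns_def intro!: prod.cong)
  also have "\<dots> = real_of_int K * PA"
    unfolding PA_def using \<open>0 < r\<close> by (subst (2) prod.remove[of _ 0]) (auto simp: Ns_def)
  finally have prod_Ns: "(\<Prod>j<r. real_of_int (Ns j)) = real_of_int K * PA" .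
  have "X/2 = X / (2 * PA) * PA" using PA_pos by simp
  also have "\<dots> \<le> real_of_int K * PA" using K(1) PA_pos by (intro mult_right_mono) auto
  finally have lower: "X/2 \<le> real_of_int K * PA" .
  have "real_of_int K * PA \<le> (X / (2 * PA) + 1) * PA" using K(2) PA_pos
    by (intro mult_right_mono) auto
  also have "\<dots> = X/2 + PA" using PA_pos by (simp add: field_simps)
  also have "\<dots> \<le> X" using False by (simp add: PA_def)
  also have "\<dots> \<le> c * X" using \<open>0 < X\<close> \<open>1 \<le> c\<close> by simp
  finally have upper: "real_of_int K * PA \<le> c * X" .
  have "A 0 * 1 \<le> A 0 * K" using A_pos \<open>0 < r\<close> \<open>1 \<le> K\<close> by (intro mult_left_mono) auto
  then have "\<forall>j<r. A j \<le> Ns j" by (simp add: Ns_def)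
  then show ?thesis using lower upper prod_Ns by (intro that) auto
qed

locale primitive_vector =
  fixes d :: nat and N :: "nat \<Rightarrow> int" and b :: "nat \<Rightarrow> int"
  assumes two_le_d: "d \<ge> 2" and N_pos: "\<forall>i<d. N i > 0" and b_nonzero: "\<exists>i<d. b i \<noteq> 0"
    and Gcd_b: "Gcd (b ` {..<d}) = 1"
begin

definition r :: nat where "r = d - 1"

lemma d_eq: "d = Suc r" using two_le_d by (simp add: r_def)

definition ratio :: "nat \<Rightarrow> real" where "ratio i = real_of_int \<bar>b i\<bar> / real_of_int (N i)"

definition max_ratio :: real where "max_ratio = Max (ratio ` {..<d})"

definition covol :: real where "covol = (\<Prod>i<d. real_of_int (N i)) * max_ratio"

definition pivot :: nat where "pivot = (SOME m. m < d \<and> ratio m = max_ratio)"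

lemma pivot: "pivot < d" "ratio pivot = max_ratio"
proof -
  have "{..<d} \<noteq> {}" using two_le_d by (auto simp: lessThan_empty_iff)
  then have "max_ratio \<in> ratio ` {..<d}" unfolding max_ratio_def by (intro Max_in) auto
  then have "\<exists>m. m < d \<and> ratio m = max_ratio" by auto
  from someI_ex[OF this] show "pivot < d" "ratio pivot = max_ratio" unfolding pivot_def by auto
qed

lemma ratio_le_pivot: "i < d \<Longrightarrow> ratio i \<le> ratio pivot"
  unfolding pivot(2) max_ratio_def by (intro Max_ge) auto

lemma b_pivot_nonzero: "b pivot \<noteq> 0"
proof
  assume "b pivot = 0"
  obtain i where i: "i < d" "b i \<noteq> 0" using b_nonzero by auto
  have "ratio i > 0" using i N_pos by (simp add: ratio_def)
  moreover have "ratio pivot = 0" using \<open>b pivot = 0\<close> by (simp add: ratio_def)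
  ultimately show False using ratio_le_pivot[OF i(1)] by simp
qed

lemma b_N_pivot_le:
  "i < d \<Longrightarrow> real_of_int \<bar>b i\<bar> * real_of_int (N pivot) \<le> real_of_int \<bar>b pivot\<bar> * real_of_int (N i)"
  using ratio_le_pivot[of i] N_pos pivot(1)
  by (simp add: ratio_def divide_le_eq le_divide_eq mult.commute)

lemma covol_eq: "covol = real_of_int \<bar>b pivot\<bar> * (\<Prod>i\<in>{..<d}-{pivot}. real_of_int (N i))"
proof -
  have "N pivot > 0" using N_pos pivot(1) by simp
  moreover have "(\<Prod>i<d. real_of_int (N i)) = real_of_int (N pivot) * (\<Prod>i\<in>{..<d}-{pivot}. real_of_int (N i))"
    using pivot(1) by (intro prod.remove) auto
  ultimately show ?thesis unfolding covol_def pivot(2)[symmetric] ratio_def by simp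
qed

lemma covol_pos: "covol > 0"
  unfolding covol_eq using b_pivot_nonzero N_pos by (intro mult_pos_pos prod_pos) auto

definition skip_pivot :: "nat \<Rightarrow> nat" where "skip_pivot k = (if k < pivot then k else Suc k)"

lemma skip_pivot_neq: "skip_pivot k \<noteq> pivot" by (simp add: skip_pivot_def)
lemma skip_pivot_less: "k < r \<Longrightarrow> skip_pivot k < d" using pivot(1)
  by (auto simp: skip_pivot_def r_def)
lemma skip_pivot_mono: "k < k' \<Longrightarrow> skip_pivot k < skip_pivot k'" by (simp add: skip_pivot_def)
lemma inj_skip_pivot: "inj skip_pivot"
  by (rule strict_mono_imp_inj_on) (simp add: strict_mono_def skip_pivot_mono)

lemma skip_pivot_image: "skip_pivot ` {..<r} = {..<d} - {pivot}"
proof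
  show "skip_pivot ` {..<r} \<subseteq> {..<d} - {pivot}" using skip_pivot_less skip_pivot_neq by auto
  show "{..<d} - {pivot} \<subseteq> skip_pivot ` {..<r}"
  proof
    fix i assume i: "i \<in> {..<d} - {pivot}"
    show "i \<in> skip_pivot ` {..<r}"
    proof (cases "i < pivot")
      case True then show ?thesis using pivot(1)
        by (intro image_eqI[of _ _ i]) (auto simp: skip_pivot_def r_def)
    next
      case False then show ?thesis using i
        by (intro image_eqI[of _ _ "i - 1"]) (auto simp: skip_pivot_def r_def)
    qed
  qed
qed

definition prefix :: "nat \<Rightarrow> nat set" where "prefix k = insert pivot (skip_pivot ` {..<k})"

lemma prefix_Suc: "prefix (Suc k) = insert (skip_pivot k) (prefix k)"
  by (auto simp: prefix_def lessThan_Suc)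
lemma finite_prefix: "finite (prefix k)" by (simp add: prefix_def)
lemma prefix_subset: "k \<le> r \<Longrightarrow> prefix k \<subseteq> {..<d}" using pivot(1) skip_pivot_less
  by (auto simp: prefix_def)
lemma prefix_r: "prefix r = {..<d}" using skip_pivot_image pivot(1) by (auto simp: prefix_def)

lemma skip_pivot_notin_prefix: "l \<le> k \<Longrightarrow> skip_pivot k \<notin> prefix l"
proof
  assume l: "l \<le> k" and "skip_pivot k \<in> prefix l"
  then obtain j where "j < l" "skip_pivot k = skip_pivot j" using skip_pivot_neq
    by (auto simp: prefix_def)
  then show False using skip_pivot_mono[of j k] l by simp
qed

definition prefix_gcd :: "nat \<Rightarrow> int" where "prefix_gcd k = Gcd (b ` prefix k)"

lemma prefix_gcd_0: "prefix_gcd 0 = \<bar>b pivot\<bar>" by (simp add: prefix_gcd_def prefix_def)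
lemma prefix_gcd_Suc: "prefix_gcd (Suc k) = gcd (b (skip_pivot k)) (prefix_gcd k)"
  by (simp add: prefix_gcd_def prefix_Suc)
lemma prefix_gcd_r: "prefix_gcd r = 1" using Gcd_b by (simp add: prefix_gcd_def prefix_r)
lemma prefix_gcd_pos: "prefix_gcd k > 0"
  by (induction k) (simp_all add: prefix_gcd_0 prefix_gcd_Suc b_pivot_nonzero)

definition gcd_step :: "nat \<Rightarrow> int" where "gcd_step k = prefix_gcd k div prefix_gcd (Suc k)"
definition b_step :: "nat \<Rightarrow> int" where "b_step k = b (skip_pivot k) div prefix_gcd (Suc k)"

lemma prefix_gcd_eq: "prefix_gcd k = gcd_step k * prefix_gcd (Suc k)"
  unfolding gcd_step_def by (simp add: prefix_gcd_Suc)
lemma b_skip_pivot_eq: "b (skip_pivot k) = b_step k * prefix_gcd (Suc k)"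
  unfolding b_step_def by (simp add: prefix_gcd_Suc)
lemma gcd_step_pos: "gcd_step k > 0"
  using prefix_gcd_eq[of k] prefix_gcd_pos[of k] prefix_gcd_pos[of "Suc k"]
  by (simp add: zero_less_mult_iff)

lemma prod_gcd_step: "(\<Prod>k<r. gcd_step k) = \<bar>b pivot\<bar>"
proof -
  have "(\<Prod>k<K. gcd_step k) * prefix_gcd K = \<bar>b pivot\<bar>" for K
  proof (induction K)
    case (Suc K) then show ?case by (simp add: prefix_gcd_eq[of K] mult_ac)
  qed (simp add: prefix_gcd_0)
  from this[of r] show ?thesis by (simp add: prefix_gcd_r)
qed

definition bezout :: "nat \<Rightarrow> nat \<Rightarrow> int" where
  "bezout k = (SOME a. (\<Sum>i\<in>prefix k. a i * b i) = prefix_gcd k)"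

lemma bezout: "(\<Sum>i\<in>prefix k. bezout k i * b i) = prefix_gcd k"
  unfolding bezout_def prefix_gcd_def using someI_ex[OF Gcd_image_lin_comb[OF finite_prefix]] .

text \<open>Row \<open>k\<close> is supported on \<open>prefix (Suc k)\<close>: the new coordinate \<open>skip_pivot k\<close>, with
  coefficient \<open>gcd_step k\<close>, is balanced against the Bezout combination of the earlier coordinates so
  that the row is orthogonal to \<open>b\<close>. The coefficients \<open>gcd_step k\<close> multiply to \<open>\<bar>b pivot\<bar>\<close>,
  which makes the Gram-Schmidt product of these rows of the order of \<open>covol\<^sup>2\<close>.\<close>

definition orth_basis :: "nat \<Rightarrow> nat \<Rightarrow> int" where
  "orth_basis k i = (if i = skip_pivot k then gcd_step k else if i \<in> prefix k then - b_step k * bezout k i else 0)"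

lemma orth_basis_outside: "i \<notin> prefix (Suc k) \<Longrightarrow> orth_basis k i = 0"
  by (simp add: orth_basis_def prefix_Suc)

lemma orth_basis_prefix_sum:
  "(\<Sum>i\<in>prefix k. orth_basis k i * z i) = - b_step k * (\<Sum>i\<in>prefix k. bezout k i * z i)"
  using skip_pivot_notin_prefix[of k k]
  by (auto simp: orth_basis_def sum_distrib_left mult.assoc intro!: sum.cong)

lemma sum_orth_basis:
  assumes "k < r"
  shows "(\<Sum>i<d. orth_basis k i * z i) = gcd_step k * z (skip_pivot k) - b_step k * (\<Sum>i\<in>prefix k. bezout k i * z i)"
proof -
  have "(\<Sum>i<d. orth_basis k i * z i) = (\<Sum>i\<in>prefix (Suc k). orth_basis k i * z i)"
    using assms prefix_subset[of "Suc k"] orth_basis_outside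
    by (intro sum.mono_neutral_right) (auto simp: r_def)
  also have "\<dots> = orth_basis k (skip_pivot k) * z (skip_pivot k) + (\<Sum>i\<in>prefix k. orth_basis k i * z i)"
    unfolding prefix_Suc using skip_pivot_notin_prefix[of k k] finite_prefix by simp
  finally show ?thesis by (simp add: orth_basis_prefix_sum orth_basis_def[of k "skip_pivot k"])
qed

lemma orth_basis_orth: "k < r \<Longrightarrow> (\<Sum>i<d. orth_basis k i * b i) = 0"
  by (simp add: sum_orth_basis bezout b_skip_pivot_eq prefix_gcd_eq[of k])

definition dot :: "(nat \<Rightarrow> int) \<Rightarrow> (nat \<Rightarrow> int) \<Rightarrow> int" where
  "dot x y = (\<Sum>i<d. x i * y i)"

definition exact_annihilator :: "(nat \<Rightarrow> nat \<Rightarrow> int) \<Rightarrow> bool" where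
  "exact_annihilator B \<longleftrightarrow> (\<forall>k<r. dot (B k) b = 0)
     \<and> (\<forall>z. (\<forall>k<r. dot (B k) z = 0) \<longrightarrow> (\<exists>t. \<forall>i<d. z i = t * b i))"

lemma dot_triangular:
  assumes "\<And>t. t < d \<Longrightarrow> B' k t = B k t + (\<Sum>l<k. c k l * B l t)"
  shows "dot (B' k) z = dot (B k) z + (\<Sum>l<k. c k l * dot (B l) z)"
proof -
  have "dot (B' k) z = (\<Sum>i<d. B k i * z i + (\<Sum>l<k. c k l * (B l i * z i)))"
    unfolding dot_def
    by (rule sum.cong) (simp_all add: assms sum_distrib_right sum_distrib_left distrib_left distrib_right mult_ac)
  also have "\<dots> = dot (B k) z + (\<Sum>l<k. c k l * dot (B l) z)"
    unfolding dot_def by (simp add: sum.distrib sum_distrib_left sum.swap[of _ "{..<d}"])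
  finally show ?thesis .
qed

lemma exact_annihilator_triangular:
  assumes "exact_annihilator B" "\<And>k t. k < r \<Longrightarrow> t < d \<Longrightarrow> B' k t = B k t + (\<Sum>l<k. c k l * B l t)"
  shows "exact_annihilator B'"
proof -
  have dot_B': "dot (B' k) z = dot (B k) z + (\<Sum>l<k. c k l * dot (B l) z)" if "k < r" for k z
    using assms(2) that by (intro dot_triangular) auto
  have "\<forall>k<r. dot (B' k) b = 0" using assms(1) unfolding exact_annihilator_def by (simp add: dot_B')
  moreover have "dot (B k) z = 0" if "\<forall>k<r. dot (B' k) z = 0" "k < r" for k z
    using that(2)
  proof (induction k rule: less_induct)
    case (less k)
    then show ?case using dot_B'[OF less.prems, of z] that(1) by simp
  qed
  ultimately show ?thesis using assms(1) unfolding exact_annihilator_def by blast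
qed

lemma exact_annihilator_swap_adj:
  assumes "exact_annihilator B" "Suc j < r"
  shows "exact_annihilator (swap_adj B j)"
proof -
  define \<sigma> where "\<sigma> l = (if l = j then Suc j else if l = Suc j then j else l)" for l
  have \<sigma>_image: "\<sigma> ` {..<r} = {..<r}" using assms(2) by (auto simp: \<sigma>_def image_iff)
  have swap_adj_eq: "swap_adj B j k = B (\<sigma> k)" for k by (simp add: swap_adj_def \<sigma>_def)
  have "(\<forall>k<r. dot (swap_adj B j k) z = 0) \<longleftrightarrow> (\<forall>k<r. dot (B k) z = 0)" for z
  proof -
    let ?P = "\<lambda>x. dot x z = 0"
    have "(\<forall>k<r. ?P (swap_adj B j k)) \<longleftrightarrow> (\<forall>k\<in>{..<r}. ((\<lambda>k. ?P (B k)) \<circ> \<sigma>) k)"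
      by (simp add: swap_adj_eq Ball_def)
    also have "\<dots> \<longleftrightarrow> (\<forall>k\<in>\<sigma> ` {..<r}. ?P (B k))" by (simp only: Ball_image_comp)
    finally show ?thesis by (simp add: \<sigma>_image Ball_def)
  qed
  then show ?thesis using assms(1) unfolding exact_annihilator_def by simp
qed

lemma orth_basis_kernel:
  assumes z: "\<forall>k<r. dot (orth_basis k) z = 0"
  shows "k \<le> r \<Longrightarrow> \<forall>i\<in>prefix k. z i * b pivot = z pivot * b i"
proof (induction k)
  case 0 then show ?case by (simp add: prefix_def)
next
  case (Suc k)
  then have k: "k < r" and IH: "\<forall>i\<in>prefix k. z i * b pivot = z pivot * b i" by simp_all
  have step: "gcd_step k * z (skip_pivot k) = b_step k * (\<Sum>i\<in>prefix k. bezout k i * z i)"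
    using z k sum_orth_basis[OF k, of z] by (simp add: dot_def)
  have "gcd_step k * (z (skip_pivot k) * b pivot) = (gcd_step k * z (skip_pivot k)) * b pivot"
    by (simp add: mult_ac)
  also have "\<dots> = b_step k * (\<Sum>i\<in>prefix k. bezout k i * (z i * b pivot))"
    by (simp add: step sum_distrib_left sum_distrib_right mult_ac)
  also have "\<dots> = b_step k * (\<Sum>i\<in>prefix k. z pivot * (bezout k i * b i))"
    using IH by (simp add: mult_ac cong: sum.cong)
  also have "\<dots> = b_step k * z pivot * prefix_gcd k"
    by (simp add: sum_distrib_left[symmetric] bezout)
  also have "\<dots> = gcd_step k * (z pivot * b (skip_pivot k))"
    by (simp add: prefix_gcd_eq[of k] b_skip_pivot_eq[of k] mult_ac)
  finally have "z (skip_pivot k) * b pivot = z pivot * b (skip_pivot k)"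
    using gcd_step_pos[of k] by simp
  then show ?case using IH by (simp add: prefix_Suc)
qed

lemma exact_annihilator_orth_basis: "exact_annihilator orth_basis"
  unfolding exact_annihilator_def
proof (intro conjI allI impI)
  fix k assume "k < r" then show "dot (orth_basis k) b = 0" using orth_basis_orth
    by (simp add: dot_def)
next
  fix z assume z: "\<forall>k<r. dot (orth_basis k) z = 0"
  have zb: "z i * b pivot = z pivot * b i" if "i < d" for i
    using orth_basis_kernel[OF z, of r] that by (simp add: prefix_r)
  obtain a where a: "(\<Sum>i<d. a i * b i) = 1" using Gcd_image_lin_comb[of "{..<d}" b] Gcd_b by auto
  define t where "t = (\<Sum>i<d. a i * z i)"
  have "z i = t * b i" if "i < d" for i
  proof -
    have "b pivot * (t * b i) = (\<Sum>l<d. a l * (z l * b pivot) * b i)"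
      by (simp add: t_def sum_distrib_left sum_distrib_right mult_ac)
    also have "\<dots> = (\<Sum>l<d. z pivot * b i * (a l * b l))" by (rule sum.cong) (auto simp: zb mult_ac)
    also have "\<dots> = z pivot * b i" by (simp add: sum_distrib_left[symmetric] a)
    also have "\<dots> = b pivot * z i" using zb[OF that] by (simp add: mult_ac)
    finally show ?thesis using b_pivot_nonzero by simp
  qed
  then show "\<exists>t. \<forall>i<d. z i = t * b i" by blast
qed

text \<open>With weights \<open>N i\<^sup>2\<close>, the width \<open>box_width d N a\<close> of the image of the box under
  \<open>x \<mapsto> a \<bullet> x\<close> is at most \<open>sqrt d\<close> times the weighted norm of \<open>a\<close> (\<open>box_width_sq_le\<close>).\<close>

interpretation L: lll_setting d "\<lambda>i. (real_of_int (N i))^2" r exact_annihilator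
proof
  show "1 \<le> (real_of_int (N t))^2" if "t < d" for t
    using N_pos that by (simp add: one_le_power int_one_le_iff_zero_less)
qed (auto intro: exact_annihilator_triangular exact_annihilator_swap_adj)

lemma gso_sq_orth_basis_pos:
  assumes "k < r"
  shows "L.gso_sq orth_basis k > 0"
proof -
  let ?p = "skip_pivot k"
  have "L.real_rows orth_basis l ?p = 0" if "l < k" for l
    using orth_basis_outside[of ?p l] skip_pivot_notin_prefix[of "Suc l" k] that
    by (simp add: L.real_rows_def)
  then have "L.real_rows orth_basis k ?p - L.gso (L.real_rows orth_basis) k ?p = 0"
    using L.vec_minus_gso_in_span[of "L.real_rows orth_basis" k] skip_pivot_less[OF assms]
    by (auto simp: L.span_first_def)
  then have "L.gso (L.real_rows orth_basis) k ?p = real_of_int (gcd_step k)"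
    by (simp add: L.real_rows_def orth_basis_def)
  moreover have "(real_of_int (N ?p))^2 * (L.gso (L.real_rows orth_basis) k ?p)^2 \<le> L.gso_sq orth_basis k"
    unfolding L.gso_sq_def by (rule L.ip_self_ge_coord[OF skip_pivot_less[OF assms]])
  ultimately have "(real_of_int (N ?p))^2 * (real_of_int (gcd_step k))^2 \<le> L.gso_sq orth_basis k"
    by simp
  moreover have "0 < (real_of_int (N ?p))^2 * (real_of_int (gcd_step k))^2"
    using N_pos skip_pivot_less[OF assms] gcd_step_pos[of k] by (intro mult_pos_pos) auto
  ultimately show ?thesis by linarith
qed

lemma orth_basis_prefix_sum_b:
  "(\<Sum>i\<in>prefix k. real_of_int (orth_basis k i) * real_of_int (b i))
     = - real_of_int (gcd_step k) * real_of_int (b (skip_pivot k))"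
proof -
  have "(\<Sum>i\<in>prefix k. orth_basis k i * b i) = - gcd_step k * b (skip_pivot k)"
    by (simp add: orth_basis_prefix_sum bezout prefix_gcd_eq[of k] b_skip_pivot_eq[of k])
  then have "real_of_int (\<Sum>i\<in>prefix k. orth_basis k i * b i) = real_of_int (- gcd_step k * b (skip_pivot k))"
    by simp
  then show ?thesis by simp
qed

lemma orth_to_b_in_span_orth_basis:
  assumes "k \<le> r" and "\<And>i. i \<notin> prefix k \<Longrightarrow> y i = 0"
    and "(\<Sum>i\<in>prefix k. y i * real_of_int (b i)) = 0"
  shows "y \<in> L.span_first (L.real_rows orth_basis) k"
  using assms
proof (induction k arbitrary: y)
  case 0
  then have "y pivot = 0" using b_pivot_nonzero by (simp add: prefix_def)
  then have "y i = 0" for i using "0.prems"(2)[of i] by (cases "i = pivot") (auto simp: prefix_def)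
  then show ?case using L.span_first_zero by (rule_tac L.span_first_cong) auto
next
  case (Suc k)
  let ?c = "y (skip_pivot k) / real_of_int (gcd_step k)"
  define y' where "y' = (\<lambda>i. y i - ?c * L.real_rows orth_basis k i)"
  have gcd_step: "real_of_int (gcd_step k) \<noteq> 0" using gcd_step_pos[of k] by simp
  have supp: "y' i = 0" if "i \<notin> prefix k" for i
  proof (cases "i = skip_pivot k")
    case True then show ?thesis using gcd_step by (simp add: y'_def L.real_rows_def orth_basis_def)
  next
    case False
    then have "i \<notin> prefix (Suc k)" using that by (simp add: prefix_Suc)
    then show ?thesis using Suc.prems(2) orth_basis_outside by (simp add: y'_def L.real_rows_def)
  qed
  have "y (skip_pivot k) * real_of_int (b (skip_pivot k)) + (\<Sum>i\<in>prefix k. y i * real_of_int (b i)) = 0"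
    using Suc.prems(3) skip_pivot_notin_prefix[of k k] finite_prefix by (simp add: prefix_Suc)
  moreover have "(\<Sum>i\<in>prefix k. y' i * real_of_int (b i)) = (\<Sum>i\<in>prefix k. y i * real_of_int (b i))
      - ?c * (\<Sum>i\<in>prefix k. real_of_int (orth_basis k i) * real_of_int (b i))"
    by (simp add: y'_def L.real_rows_def algebra_simps sum_subtractf sum_distrib_left)
  ultimately have "(\<Sum>i\<in>prefix k. y' i * real_of_int (b i)) = 0"
    using gcd_step by (simp add: orth_basis_prefix_sum_b)
  then have "y' \<in> L.span_first (L.real_rows orth_basis) k"
    using Suc.IH[of y'] Suc.prems(1) supp by simp
  then have "y' \<in> L.span_first (L.real_rows orth_basis) (Suc k)"
    by (rule L.span_first_mono[rotated]) simp
  moreover have "(\<lambda>t. ?c * L.real_rows orth_basis k t) \<in> L.span_first (L.real_rows orth_basis) (Suc k)"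
    by (intro L.span_first_scale L.span_first_gen) simp
  ultimately have "(\<lambda>t. y' t + ?c * L.real_rows orth_basis k t) \<in> L.span_first (L.real_rows orth_basis) (Suc k)"
    by (rule L.span_first_add)
  then show ?case by (rule L.span_first_cong) (simp add: y'_def)
qed

text \<open>Modulo the earlier rows, row \<open>k\<close> is congruent to a vector supported on \<open>skip_pivot k\<close> and
  \<open>pivot\<close> only; the choice of \<open>pivot\<close> as a maximiser of \<open>\<bar>b i\<bar> / N i\<close> makes it short.\<close>

definition short_rep :: "nat \<Rightarrow> nat \<Rightarrow> real" where
  "short_rep k i = (if i = skip_pivot k then real_of_int (gcd_step k)
     else if i = pivot then - real_of_int (gcd_step k) * real_of_int (b (skip_pivot k)) / real_of_int (b pivot)
     else 0)"

lemma orth_basis_minus_short_rep: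
  assumes "k < r"
  shows "(\<lambda>i. L.real_rows orth_basis k i - short_rep k i) \<in> L.span_first (L.real_rows orth_basis) k"
proof (rule orth_to_b_in_span_orth_basis)
  have "pivot \<in> prefix k" by (simp add: prefix_def)
  show "L.real_rows orth_basis k i - short_rep k i = 0" if "i \<notin> prefix k" for i
    using that \<open>pivot \<in> prefix k\<close> orth_basis_outside[of i k]
    by (cases "i = skip_pivot k") (auto simp: short_rep_def L.real_rows_def orth_basis_def prefix_Suc)
  have "(\<Sum>i\<in>prefix k. short_rep k i * real_of_int (b i))
      = (\<Sum>i\<in>prefix k. if i = pivot then short_rep k pivot * real_of_int (b pivot) else 0)"
    using skip_pivot_notin_prefix[of k k] by (intro sum.cong) (auto simp: short_rep_def)
  also have "\<dots> = - real_of_int (gcd_step k) * real_of_int (b (skip_pivot k))"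
    using \<open>pivot \<in> prefix k\<close> finite_prefix b_pivot_nonzero skip_pivot_neq[of k]
    by (simp add: short_rep_def)
  finally have "(\<Sum>i\<in>prefix k. short_rep k i * real_of_int (b i))
      = (\<Sum>i\<in>prefix k. real_of_int (orth_basis k i) * real_of_int (b i))"
    by (simp add: orth_basis_prefix_sum_b)
  then show "(\<Sum>i\<in>prefix k. (L.real_rows orth_basis k i - short_rep k i) * real_of_int (b i)) = 0"
    by (simp add: L.real_rows_def algebra_simps sum_subtractf)
qed (use assms in simp)

lemma ip_short_rep_le:
  assumes k: "k < r"
  shows "L.ip (short_rep k) (short_rep k) \<le> 2 * (real_of_int (gcd_step k))^2 * (real_of_int (N (skip_pivot k)))^2"
proof -
  let ?p = "skip_pivot k" and ?g = "real_of_int (gcd_step k)"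
  let ?zm = "short_rep k pivot"
  have "L.ip (short_rep k) (short_rep k) = (\<Sum>t\<in>{?p, pivot}. (real_of_int (N t))^2 * short_rep k t * short_rep k t)"
    unfolding L.ip_def using skip_pivot_less[OF k] pivot(1)
    by (intro sum.mono_neutral_right) (auto simp: short_rep_def)
  also have "\<dots> = (real_of_int (N ?p))^2 * ?g^2 + (real_of_int (N pivot) * ?zm)^2"
    using skip_pivot_neq[of k] by (simp add: short_rep_def power2_eq_square)
  also have "(real_of_int (N pivot) * ?zm)^2 \<le> (?g * real_of_int (N ?p))^2"
  proof (rule power2_le_iff_abs_le[THEN iffD2])
    have "N pivot > 0" using N_pos pivot(1) by simp
    then have "\<bar>real_of_int (N pivot) * ?zm\<bar>
        = \<bar>?g\<bar> * (real_of_int \<bar>b ?p\<bar> * real_of_int (N pivot) / real_of_int \<bar>b pivot\<bar>)"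
      using skip_pivot_neq[of k] by (simp add: short_rep_def abs_mult abs_divide)
    also have "\<dots> \<le> \<bar>?g\<bar> * real_of_int (N ?p)"
      using b_N_pivot_le[OF skip_pivot_less[OF k]] b_pivot_nonzero
      by (intro mult_left_mono) (simp_all add: divide_le_eq mult.commute)
    finally show "\<bar>real_of_int (N pivot) * ?zm\<bar> \<le> ?g * real_of_int (N ?p)"
      using gcd_step_pos[of k] by simp
  qed (use gcd_step_pos[of k] N_pos skip_pivot_less[OF k] in auto)
  finally show ?thesis by (simp add: power_mult_distrib)
qed

lemma gso_sq_orth_basis_le:
  assumes "k < r"
  shows "L.gso_sq orth_basis k \<le> 2 * (real_of_int (gcd_step k))^2 * (real_of_int (N (skip_pivot k)))^2"
proof -
  have "L.gso_sq orth_basis k \<le> L.ip (short_rep k) (short_rep k)"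
    using L.gso_minimal[OF orth_basis_minus_short_rep[OF assms]] unfolding L.gso_sq_def by simp
  also note ip_short_rep_le[OF assms]
  finally show ?thesis .
qed

lemma prod_gso_sq_orth_basis: "(\<Prod>k<r. L.gso_sq orth_basis k) \<le> 2^r * covol^2"
proof -
  have "(\<Prod>k<r. L.gso_sq orth_basis k)
      \<le> (\<Prod>k<r. 2 * (real_of_int (gcd_step k))^2 * (real_of_int (N (skip_pivot k)))^2)"
    by (intro prod_mono conjI L.gso_sq_nonneg gso_sq_orth_basis_le) auto
  also have "\<dots> = 2^r * (\<Prod>k<r. real_of_int (gcd_step k))^2 * (\<Prod>k<r. real_of_int (N (skip_pivot k)))^2"
    by (simp add: prod.distrib prod_power_distrib)
  also have "(\<Prod>k<r. real_of_int (gcd_step k)) = real_of_int \<bar>b pivot\<bar>"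
    using prod_gcd_step by (metis of_int_prod)
  also have "(\<Prod>k<r. real_of_int (N (skip_pivot k))) = (\<Prod>i\<in>{..<d}-{pivot}. real_of_int (N i))"
    using prod.reindex[OF inj_on_subset[OF inj_skip_pivot subset_UNIV], of "\<lambda>i. real_of_int (N i)" "{..<r}"]
    by (simp add: skip_pivot_image)
  finally show ?thesis by (simp add: covol_eq power_mult_distrib)
qed

lemma row_nonzero_if_gso_sq_pos:
  assumes "L.gso_sq B j > 0"
  shows "\<exists>i<d. B j i \<noteq> 0"
proof (rule ccontr)
  assume "\<not> ?thesis"
  then have "L.ip (L.real_rows B j) (L.real_rows B j) = 0" by (simp add: L.ip_def L.real_rows_def)
  moreover have "L.ip (L.real_rows B j) (L.real_rows B j) \<ge> L.gso_sq B j"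
    unfolding L.gso_sq_def L.ip_self_gso_decomp[of "L.real_rows B" j]
    by (simp add: sum_nonneg L.ip_nonneg)
  ultimately show False using assms by simp
qed

lemma two_power_bound: "real d ^ r * 2^(r*r) * 2^r \<le> (2::real)^(2 * d^2)"
proof -
  have "real d ^ r \<le> (2^d)^r" using of_nat_less_two_power[of d] by (intro power_mono) auto
  then have "real d ^ r * 2^(r*r) * 2^r \<le> 2^(d*r) * 2^(r*r) * 2^r"
    by (simp add: power_mult mult_right_mono)
  also have "\<dots> = (2::real)^(d*r + r*r + r)" by (simp add: power_add)
  also have "\<dots> \<le> 2^(2 * d^2)"
  proof (rule power_increasing)
    obtain q where "r = q" "d = Suc q" using d_eq by blast
    then show "d*r + r*r + r \<le> 2 * d^2" by (simp add: power2_eq_square)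
  qed simp
  finally show ?thesis .
qed

lemma exists_reduced_annihilator:
  obtains M where "exact_annihilator M" "\<forall>j<r. \<exists>i<d. M j i \<noteq> 0"
    "(\<Prod>j<r. real_of_int (box_width d N (M j))) \<le> 2^(d^2) * covol"
proof -
  have "\<forall>k<r. L.gso_sq orth_basis k > 0" using gso_sq_orth_basis_pos by blast
  then obtain B where B: "exact_annihilator B" "\<forall>k<r. L.gso_sq B k > 0"
      "(\<Prod>k<r. L.gso_sq B k) \<le> (\<Prod>k<r. L.gso_sq orth_basis k)"
      "\<forall>k<r. L.ip (L.real_rows B k) (L.real_rows B k) \<le> 2^(2*k+1) * L.gso_sq B k"
    by (rule L.lll_exists[OF exact_annihilator_orth_basis])
  have "(\<Prod>j<r. real_of_int (box_width d N (B j)))^2 = (\<Prod>j<r. (real_of_int (box_width d N (B j)))^2)"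
    by (simp add: prod_power_distrib)
  also have "\<dots> \<le> (\<Prod>j<r. real d * 2^(2*j+1) * L.gso_sq B j)"
  proof (intro prod_mono conjI)
    fix j assume "j \<in> {..<r}"
    have "(real_of_int (box_width d N (B j)))^2 \<le> real d * L.ip (L.real_rows B j) (L.real_rows B j)"
      using box_width_sq_le[of d N "B j"] unfolding L.ip_def L.real_rows_def .
    also have "\<dots> \<le> real d * (2^(2*j+1) * L.gso_sq B j)"
      using B(4) \<open>j \<in> {..<r}\<close> by (intro mult_left_mono) auto
    finally show "(real_of_int (box_width d N (B j)))^2 \<le> real d * 2^(2*j+1) * L.gso_sq B j"
      by (simp only: mult.assoc)
  qed simp
  also have "\<dots> = real d ^ r * 2^(r*r) * (\<Prod>j<r. L.gso_sq B j)"
    by (simp only: prod.distrib prod_constant card_lessThan prod_two_power_odd)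
  also have "\<dots> \<le> real d ^ r * 2^(r*r) * (2^r * covol^2)"
    using order_trans[OF B(3) prod_gso_sq_orth_basis] by (intro mult_left_mono) auto
  also have "\<dots> = (real d ^ r * 2^(r*r) * 2^r) * covol^2" by (simp only: mult.assoc)
  also have "\<dots> \<le> 2^(2*d^2) * covol^2" by (rule mult_right_mono[OF two_power_bound]) simp
  also have "(2::real)^(2*d^2) = (2^(d^2))^2" by (subst mult.commute) (rule power_mult)
  also have "(2^(d^2))^2 * covol^2 = (2^(d^2) * covol)^2" by (simp only: power_mult_distrib)
  finally have prod_le: "(\<Prod>j<r. real_of_int (box_width d N (B j))) \<le> 2^(d^2) * covol"
    by (rule power2_le_imp_le) (use covol_pos in simp)
  have "\<forall>j<r. \<exists>i<d. B j i \<noteq> 0" using B(2) row_nonzero_if_gso_sq_pos by blast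
  with B(1) show ?thesis using prod_le by (rule that)
qed

lemma affine_map_eq_iff:
  assumes "exact_annihilator M"
  shows "(\<forall>j<r. affine_map d M v x1 j = affine_map d M v x2 j) \<longleftrightarrow> (\<exists>k. \<forall>i<d. x1 i - x2 i = k * b i)"
proof -
  have eq: "affine_map d M v x1 j = affine_map d M v x2 j \<longleftrightarrow> dot (M j) (\<lambda>i. x1 i - x2 i) = 0" for j
    by (simp add: affine_map_def dot_def right_diff_distrib sum_subtractf)
  have "dot (M j) (\<lambda>i. k * b i) = k * dot (M j) b" for j k
    by (simp add: dot_def sum_distrib_left mult_ac)
  then have "(\<forall>k<r. dot (M k) z = 0) \<longleftrightarrow> (\<exists>t. \<forall>i<d. z i = t * b i)" for z
    using assms unfolding exact_annihilator_def by (auto simp: dot_def)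
  then show ?thesis unfolding eq by simp
qed

lemma exists_box_sides:
  assumes "\<forall>j<r. \<exists>i<d. M j i \<noteq> 0"
    and prod_le: "(\<Prod>j<r. real_of_int (box_width d N (M j))) \<le> 2^(d^2) * covol"
  obtains Ns where "\<forall>j<r. Ns j > 0 \<and> Ns j \<ge> Min (N ` {..<d})"
    "covol/2 \<le> (\<Prod>j<r. real_of_int (Ns j))" "(\<Prod>j<r. real_of_int (Ns j)) \<le> 2^(d^2) * covol"
    "\<forall>x. (\<forall>i<d. x i \<in> {1..N i}) \<longrightarrow> (\<forall>j<r. affine_map d M (\<lambda>j. box_offset d N (M j)) x j \<in> {1..Ns j})"
proof -
  have "Min (N ` {..<d}) > 0" using two_le_d N_pos by (subst Min_gr_iff) (auto simp: lessThan_empty_iff)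
  then have width: "\<forall>j<r. 0 < box_width d N (M j) \<and> Min (N ` {..<d}) \<le> box_width d N (M j)"
    using box_width_ge_Min[OF N_pos] assms(1) by fastforce
  have "0 < r" using two_le_d by (simp add: r_def)
  moreover have "\<forall>j<r. 0 < box_width d N (M j)" using width by blast
  ultimately obtain Ns where Ns: "\<forall>j<r. box_width d N (M j) \<le> Ns j"
    "covol/2 \<le> (\<Prod>j<r. real_of_int (Ns j))" "(\<Prod>j<r. real_of_int (Ns j)) \<le> 2^(d^2) * covol"
    using exists_enlarged_sides[OF _ _ covol_pos _ prod_le] by force
  have "affine_map d M (\<lambda>j. box_offset d N (M j)) x j \<in> {1..Ns j}"
    if "\<forall>i<d. x i \<in> {1..N i}" "j < r" for x j
    using lin_form_shift_in_box[OF _ that(1), of "M j"] assms(1) Ns(1) that(2)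
    by (fastforce simp: affine_map_def)
  moreover have "\<forall>j<r. Ns j > 0 \<and> Ns j \<ge> Min (N ` {..<d})"
    using width Ns(1) by (meson order_less_le_trans order_trans)
  ultimately show ?thesis using Ns(2,3) that by blast
qed

end

theorem lemma4p5:
  fixes d :: nat and N :: "nat \<Rightarrow> int" and b :: "nat \<Rightarrow> int"
  assumes "d \<ge> 2"
    and "\<forall>i<d. N i > 0"
    and "\<exists>i<d. b i \<noteq> 0"
    and "Gcd (b ` {..<d}) = 1"
    and "\<forall>i<d. \<bar>b i\<bar> \<le> N i"
  shows "\<exists>(M :: nat \<Rightarrow> nat \<Rightarrow> int) (v :: nat \<Rightarrow> int).
     (\<forall>x1 x2 :: nat \<Rightarrow> int.
        (\<forall>j<d-1. affine_map d M v x1 j = affine_map d M v x2 j)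
        \<longleftrightarrow> (\<exists>k::int. \<forall>i<d. x1 i - x2 i = k * b i))
   \<and> (\<exists>Ns :: nat \<Rightarrow> int.
        (\<forall>j<d-1. Ns j > 0 \<and> Ns j \<ge> Min (N ` {..<d}))
      \<and> (1/2) * (\<Prod>i<d. real_of_int (N i)) * Max ((\<lambda>i. real_of_int \<bar>b i\<bar> / real_of_int (N i)) ` {..<d})
          \<le> (\<Prod>j<d-1. real_of_int (Ns j))
      \<and> (\<Prod>j<d-1. real_of_int (Ns j))
          \<le> 2 ^ (d^2) * (\<Prod>i<d. real_of_int (N i)) * Max ((\<lambda>i. real_of_int \<bar>b i\<bar> / real_of_int (N i)) ` {..<d})
      \<and> (\<forall>x :: nat \<Rightarrow> int. (\<forall>i<d. x i \<in> {1..N i}) \<longrightarrow>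
            (\<forall>j<d-1. affine_map d M v x j \<in> {1..Ns j})))"
proof -
  interpret primitive_vector d N b using assms by unfold_locales
  obtain M where M: "exact_annihilator M" "\<forall>j<r. \<exists>i<d. M j i \<noteq> 0"
    and prod_le: "(\<Prod>j<r. real_of_int (box_width d N (M j))) \<le> 2^(d^2) * covol"
    by (rule exists_reduced_annihilator)
  define v where "v j = box_offset d N (M j)" for j
  obtain Ns where "\<forall>j<r. Ns j > 0 \<and> Ns j \<ge> Min (N ` {..<d})"
    "covol/2 \<le> (\<Prod>j<r. real_of_int (Ns j))" "(\<Prod>j<r. real_of_int (Ns j)) \<le> 2^(d^2) * covol"
    "\<forall>x. (\<forall>i<d. x i \<in> {1..N i}) \<longrightarrow> (\<forall>j<r. affine_map d M v x j \<in> {1..Ns j})"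
    using exists_box_sides[OF M(2) prod_le] unfolding v_def by blast
  then show ?thesis
    using affine_map_eq_iff[OF M(1), of v] unfolding r_def covol_def max_ratio_def ratio_def[abs_def]
    by (intro exI[of _ M, OF exI[of _ v, OF conjI[OF _ exI[of _ Ns]]]]) (auto simp: mult.assoc)
qed

end
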